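(* Let $F$ be a forest with $n$ vertices and $m$ connected components. Then $\tau_F(x)=x^m$.
   Context: For a weighted graph $(G,\omega)$ (a finite simple graph with $\omega:V(G)\to\{1,2,\dots\}$), $X_{(G,\omega)}=\sum_\kappa\prod_{v\in V(G)}x_{\kappa(v)}^{\omega(v)}$, summed over proper colourings $\kappa:V(G)\to\{1,2,\dots\}$; for an unweighted graph $G$, $X_G$ is this with $\omega\equiv1$. Let $P_n$ be the path on $n$ vertices and for a partition $\lambda$ let $P_\lambda$ be the disjoint union $P_{\lambda_1}\cup\dots\cup P_{\lambda_{\ell(\lambda)}}$. It is known that $\{X_{P_\lambda}\}_\lambda$ is a (multiplicative) basis of the algebra $\Lambda$ of symmetric functions over $\mathbb{Q}$. For $f=\sum_\lambda a_\lambda X_{P_\lambda}\in\Lambda$, the tree polynomial is $\tau_f(x)=\sum_\lambda a_\lambda x^{\ell(\lambda)}$, and $\tau_{(G,\omega)}:=\tau_{X_{(G,\omega)}}$, $\tau_G:=\tau_{X_G}$. *)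

theory Defs
  imports Main "HOL-Library.FuncSet" "HOL-Computational_Algebra.Polynomial"
begin

definition is_graph :: "'a set \<Rightarrow> 'a set set \<Rightarrow> bool" where
  "is_graph V E \<longleftrightarrow> finite V \<and> (\<forall>e\<in>E. \<exists>u v. e = {u, v} \<and> u \<noteq> v \<and> u \<in> V \<and> v \<in> V)"

definition has_cycle :: "'a set \<Rightarrow> 'a set set \<Rightarrow> bool" where
  "has_cycle V E \<longleftrightarrow> (\<exists>vs. length vs \<ge> 3 \<and> distinct vs \<and> set vs \<subseteq> V \<and>
      (\<forall>i. Suc i < length vs \<longrightarrow> {vs ! i, vs ! Suc i} \<in> E) \<and> {last vs, hd vs} \<in> E)"

definition is_forest :: "'a set \<Rightarrow> 'a set set \<Rightarrow> bool" where
  "is_forest V E \<longleftrightarrow> is_graph V E \<and> \<not> has_cycle V E"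

definition conn_rel :: "'a set \<Rightarrow> 'a set set \<Rightarrow> ('a \<times> 'a) set" where
  "conn_rel V E = {(u, v). u \<in> V \<and> v \<in> V \<and> (\<lambda>x y. {x, y} \<in> E)\<^sup>*\<^sup>* u v}"

definition num_components :: "'a set \<Rightarrow> 'a set set \<Rightarrow> nat" where
  "num_components V E = card (V // conn_rel V E)"

definition proper_colourings :: "'a set \<Rightarrow> 'a set set \<Rightarrow> ('a \<Rightarrow> nat) set" where
  "proper_colourings V E = {\<kappa> \<in> V \<rightarrow>\<^sub>E {1..}. \<forall>u v. {u, v} \<in> E \<longrightarrow> \<kappa> u \<noteq> \<kappa> v}"

text \<open>Chromatic symmetric function X_G, given by its coefficients: the coefficient of the
  monomial prod_i x_i^(alpha i) is the number of proper colourings in which exactly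
  alpha i vertices receive colour i, for every i.\<close>
definition chrom_coeff :: "'a set \<Rightarrow> 'a set set \<Rightarrow> (nat \<Rightarrow> nat) \<Rightarrow> nat" where
  "chrom_coeff V E \<alpha> = card {\<kappa> \<in> proper_colourings V E. \<forall>i. card {v \<in> V. \<kappa> v = i} = \<alpha> i}"

definition is_partition :: "nat list \<Rightarrow> bool" where
  "is_partition la \<longleftrightarrow> sorted_wrt (\<ge>) la \<and> 0 \<notin> set la"

text \<open>P_lambda: disjoint union of paths P_{lambda_1}, ..., P_{lambda_l}.\<close>
definition pathV :: "nat list \<Rightarrow> (nat \<times> nat) set" where
  "pathV la = {(i, j). i < length la \<and> j < la ! i}"

definition pathE :: "nat list \<Rightarrow> (nat \<times> nat) set set" where
  "pathE la = {{(i, j), (i, Suc j)} | i j. i < length la \<and> Suc j < la ! i}"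

text \<open>a is a (finitely supported) coefficient family expressing X_G = sum a_lambda X_{P_lambda}.\<close>
definition path_expansion :: "'a set \<Rightarrow> 'a set set \<Rightarrow> (nat list \<Rightarrow> rat) \<Rightarrow> bool" where
  "path_expansion V E a \<longleftrightarrow> finite {la. a la \<noteq> 0} \<and> (\<forall>la. a la \<noteq> 0 \<longrightarrow> is_partition la) \<and>
     (\<forall>\<alpha>. of_nat (chrom_coeff V E \<alpha>) =
        (\<Sum>la\<in>{la. a la \<noteq> 0}. a la * of_nat (chrom_coeff (pathV la) (pathE la) \<alpha>)))"

definition tree_poly_of :: "(nat list \<Rightarrow> rat) \<Rightarrow> rat poly" where
  "tree_poly_of a = (\<Sum>la\<in>{la. a la \<noteq> 0}. monom (a la) (length la))"

end

theory Submission
  imports Defs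
begin

text \<open>
  Uniqueness: specialising \<open>x\<^sub>1 = \<dots> = x\<^sub>q = 1\<close> and all other variables to \<open>0\<close> sends \<open>X\<^sub>G\<close> to the
  number of proper \<open>q\<close>-colourings of \<open>G\<close>, which for a forest with \<open>m\<close> components and \<open>e\<close> edges is
  \<open>q\<^sup>m (q - 1)\<^sup>e\<close>; in particular \<open>X\<^sub>P\<^sub>\<lambda>\<close> goes to \<open>q\<^bsup>\<ell>(\<lambda>)\<^esup> (q - 1)\<^bsup>|\<lambda>| - \<ell>(\<lambda>)\<^esup>\<close>. Doing this in each degree
  \<open>d\<close> separately and using that the polynomials \<open>x\<^sup>k (x - 1)\<^bsup>d - k\<^esup>\<close> are linearly independent gives
  \<open>\<Sum>{a\<^sub>\<lambda> | |\<lambda>| = d, \<ell>(\<lambda>) = k} = [d = n \<and> k = m]\<close>, i.e. \<open>\<tau>\<^sub>F = x\<^sup>m\<close>.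

  Existence: if \<open>xy\<close> and \<open>xw\<close> are edges and \<open>G'\<close> arises by replacing \<open>xw\<close> with \<open>yw\<close>, then
  \<open>X\<^sub>G = X\<^bsub>G - xy\<^esub> + X\<^bsub>G'\<^esub> - X\<^bsub>G' - xy\<^esub>\<close>, and \<open>G'\<close> is again a forest. Applying this at a vertex of
  degree at least 3 and moving the edge along a path towards a leaf decreases, lexicographically, the
  number of edges and the excess \<open>\<Sum>\<^sub>v (deg v - 2)\<close> of the forests involved, so everything reduces to
  forests of maximum degree 2, which are the \<open>P\<^sub>\<lambda>\<close> up to isomorphism.
\<close>

section \<open>Paths and cycles\<close>

definition adj :: "'a set set \<Rightarrow> 'a \<Rightarrow> 'a \<Rightarrow> bool" where
  "adj E a b \<longleftrightarrow> {a, b} \<in> E"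

lemma adj_commute: "adj E a b \<longleftrightarrow> adj E b a"
  by (simp add: adj_def insert_commute)

definition is_path :: "'a set set \<Rightarrow> 'a list \<Rightarrow> bool" where
  "is_path E p \<longleftrightarrow> distinct p \<and> successively (adj E) p"

definition is_cycle :: "'a set set \<Rightarrow> 'a list \<Rightarrow> bool" where
  "is_cycle E vs \<longleftrightarrow> length vs \<ge> 3 \<and> distinct vs \<and> successively (adj E) vs \<and> adj E (last vs) (hd vs)"

definition neighbours :: "'a set set \<Rightarrow> 'a \<Rightarrow> 'a set" where
  "neighbours E v = {w. {v, w} \<in> E}"

definition vertex_degree :: "'a set set \<Rightarrow> 'a \<Rightarrow> nat" where
  "vertex_degree E v = card (neighbours E v)"

lemma is_path_edge: "is_path E p \<Longrightarrow> Suc i < length p \<Longrightarrow> {p ! i, p ! Suc i} \<in> E"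
  unfolding is_path_def using successively_nth adj_def by fastforce

lemma graph_edgeD:
  assumes "is_graph V E" "{a, b} \<in> E"
  shows "a \<in> V" "b \<in> V" "a \<noteq> b"
  using assms unfolding is_graph_def by (metis doubleton_eq_iff insert_absorb2)+

lemma finite_graph_edges: "is_graph V E \<Longrightarrow> finite E"
  unfolding is_graph_def by (rule finite_subset[of E "Pow V"]) auto

lemma is_graph_mono: "is_graph V E \<Longrightarrow> F \<subseteq> E \<Longrightarrow> is_graph V F"
  unfolding is_graph_def by blast

lemma neighbours_subset: "is_graph V E \<Longrightarrow> neighbours E v \<subseteq> V"
  unfolding neighbours_def using graph_edgeD by fast

lemma finite_neighbours: "is_graph V E \<Longrightarrow> finite (neighbours E v)"
  using neighbours_subset[of V E v] unfolding is_graph_def by (blast intro: finite_subset)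

lemma is_cycle_subset_vertices:
  assumes g: "is_graph V E" and c: "is_cycle E vs"
  shows "set vs \<subseteq> V"
proof
  fix x assume "x \<in> set vs"
  then obtain i where i: "i < length vs" "vs ! i = x" by (auto simp: in_set_conv_nth)
  show "x \<in> V"
  proof (cases "Suc i < length vs")
    case True
    then have "adj E x (vs ! Suc i)" using c i by (auto simp: is_cycle_def successively_conv_nth)
    then show ?thesis using g graph_edgeD unfolding adj_def by metis
  next
    case False
    then have "i = length vs - 1" using i(1) by linarith
    moreover have "vs \<noteq> []" using i(1) by auto
    ultimately have "x = last vs" using i(2) by (simp add: last_conv_nth)
    then have "adj E x (hd vs)" using c by (simp add: is_cycle_def)
    then show ?thesis using g graph_edgeD unfolding adj_def by metis
  qed
qed

lemma is_forest_iff: "is_forest V E \<longleftrightarrow> is_graph V E \<and> (\<forall>vs. \<not> is_cycle E vs)"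
proof -
  have "has_cycle V E \<longleftrightarrow> (\<exists>vs. is_cycle E vs \<and> set vs \<subseteq> V)"
    unfolding has_cycle_def is_cycle_def successively_conv_nth adj_def by blast
  then show ?thesis unfolding is_forest_def using is_cycle_subset_vertices by blast
qed

lemma is_forest_mono:
  assumes "is_forest V E" "is_graph V' E'" "E' \<subseteq> E"
  shows "is_forest V' E'"
proof -
  have "is_cycle E vs" if "is_cycle E' vs" for vs
    using that successively_mono[of "adj E'" _ "adj E"] assms(3)
    unfolding is_cycle_def adj_def by blast
  then show ?thesis using assms unfolding is_forest_iff by blast
qed

lemma is_forest_delete_edge:
  assumes "is_forest V E"
  shows "is_forest V (E - {e})"
proof (rule is_forest_mono[OF assms])
  show "is_graph V (E - {e})" using assms is_graph_mono unfolding is_forest_def by blast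
qed auto

lemma is_cycle_rotate1:
  assumes "is_cycle E vs"
  shows "is_cycle E (rotate1 vs)"
proof (cases vs)
  case (Cons x xs)
  then have "xs \<noteq> []" using assms by (auto simp: is_cycle_def)
  then show ?thesis using assms Cons
    by (simp add: is_cycle_def successively_append_iff successively_Cons adj_commute)
qed (use assms in auto)

lemma is_cycle_rotate: "is_cycle E vs \<Longrightarrow> is_cycle E (rotate n vs)"
  by (induction n) (auto intro: is_cycle_rotate1)

lemma is_cycle_two_neighbours:
  assumes c: "is_cycle E vs" and x: "x \<in> set vs"
  obtains a b where "a \<noteq> b" "a \<in> set vs" "b \<in> set vs" "{x, a} \<in> E" "{x, b} \<in> E"
proof -
  obtain i where i: "i < length vs" "vs ! i = x" using x by (auto simp: in_set_conv_nth)
  define ws where "ws = rotate i vs"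
  have cw: "is_cycle E ws" unfolding ws_def by (rule is_cycle_rotate[OF c])
  have l: "length ws \<ge> 3" and d: "distinct ws" using cw unfolding is_cycle_def by auto
  have "vs \<noteq> []" using i(1) by auto
  then have hd: "hd ws = x" using i by (simp add: ws_def hd_rotate_conv_nth)
  have "hd ws = ws ! 0" using l by (intro hd_conv_nth) auto
  then have "{x, ws ! 1} \<in> E"
    using cw hd l successively_nth[of "adj E" ws 0] unfolding is_cycle_def adj_def by simp
  moreover have "{x, last ws} \<in> E" using cw hd unfolding is_cycle_def adj_def by (simp add: insert_commute)
  moreover have "ws ! 1 \<noteq> last ws"
  proof -
    have "last ws = ws ! (length ws - 1)" using l by (intro last_conv_nth) auto
    then show ?thesis using l d by (simp add: nth_eq_iff_index_eq)
  qed
  moreover have "set ws = set vs" unfolding ws_def by simp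
  moreover have "ws ! 1 \<in> set ws" "last ws \<in> set ws" using l by (auto intro!: last_in_set)
  ultimately show ?thesis using that by blast
qed

lemma maximal_path_exists:
  assumes g: "is_graph V E" and v: "v \<in> V"
  obtains p where "is_path E p" "p \<noteq> []" "hd p = v" "set p \<subseteq> V" "neighbours E (last p) \<subseteq> set p"
proof -
  define S where "S = {p. is_path E p \<and> p \<noteq> [] \<and> hd p = v \<and> set p \<subseteq> V}"
  have fin: "finite V" using g is_graph_def by auto
  have "S \<subseteq> {p. set p \<subseteq> V \<and> length p \<le> card V}"
  proof
    fix p assume "p \<in> S"
    then have "distinct p" "set p \<subseteq> V" unfolding S_def is_path_def by auto
    then show "p \<in> {p. set p \<subseteq> V \<and> length p \<le> card V}"
      using distinct_card[of p] card_mono[OF fin, of "set p"] by simp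
  qed
  then have finS: "finite S" using finite_subset[OF _ finite_lists_length_le[OF fin, of "card V"]] by blast
  have "[v] \<in> S" unfolding S_def is_path_def using v by auto
  then have ne: "length ` S \<noteq> {}" by blast
  obtain p where pS: "p \<in> S" and "length p = Max (length ` S)"
    using Max_in[OF finite_imageI[OF finS] ne] by (metis imageE)
  then have pmax: "length p' \<le> length p" if "p' \<in> S" for p'
    using that finS by simp
  have "u \<in> set p" if "u \<in> neighbours E (last p)" for u
  proof (rule ccontr)
    assume nu: "u \<notin> set p"
    have e: "{last p, u} \<in> E" using that unfolding neighbours_def by simp
    have "p @ [u] \<in> S"
      using pS nu e graph_edgeD(2)[OF g e] unfolding S_def is_path_def
      by (simp add: successively_append_iff adj_def)
    then show False using pmax[of "p @ [u]"] by simp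
  qed
  then show ?thesis using pS that unfolding S_def by blast
qed

lemma forest_maximal_path_end:
  assumes f: "is_forest V E" and p: "is_path E p" "p \<noteq> []" "neighbours E (last p) \<subseteq> set p"
    and u: "u \<in> neighbours E (last p)"
  shows "length p \<ge> 2 \<and> u = p ! (length p - 2)"
proof -
  have g: "is_graph V E" using f is_forest_def by auto
  have e: "{last p, u} \<in> E" using u unfolding neighbours_def by simp
  have "u \<in> set p" using u p(3) by blast
  then obtain k where k: "k < length p" "p ! k = u" by (auto simp: in_set_conv_nth)
  have "p ! k \<noteq> p ! (length p - 1)" using graph_edgeD(3)[OF g e] k p(2) by (simp add: last_conv_nth)
  then have kl: "k \<noteq> length p - 1" by auto
  have "\<not> k < length p - 2"
  proof
    assume kk: "k < length p - 2"
    have "is_cycle E (drop k p)"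
      unfolding is_cycle_def
    proof (intro conjI)
      show "length (drop k p) \<ge> 3" using kk by simp
      have "successively (adj E) (take k p @ drop k p)" using p(1) unfolding is_path_def by simp
      then show "successively (adj E) (drop k p)" by (simp only: successively_append_iff)
      show "distinct (drop k p)" using p(1) unfolding is_path_def by simp
      show "adj E (last (drop k p)) (hd (drop k p))"
        using e k kk by (simp add: hd_drop_conv_nth adj_def)
    qed
    then show False using f unfolding is_forest_iff by blast
  qed
  then have "k = length p - 2" "length p \<ge> 2" using k(1) kl by linarith+
  then show ?thesis using k(2) by simp
qed

lemma forest_maximal_path_degree:
  assumes "is_forest V E" "is_path E p" "p \<noteq> []" "neighbours E (last p) \<subseteq> set p"
  shows "vertex_degree E (last p) \<le> 1"
proof -
  have "neighbours E (last p) \<subseteq> {p ! (length p - 2)}"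
    using forest_maximal_path_end[OF assms] by blast
  then show ?thesis unfolding vertex_degree_def using card_mono[of "{p ! (length p - 2)}"] by fastforce
qed

lemma forest_low_degree_vertex:
  assumes f: "is_forest V E" and "V \<noteq> {}"
  obtains z where "z \<in> V" "vertex_degree E z \<le> 1"
proof -
  obtain v where v: "v \<in> V" using assms(2) by auto
  have g: "is_graph V E" using f is_forest_def by auto
  obtain p where "is_path E p" "p \<noteq> []" "set p \<subseteq> V" "neighbours E (last p) \<subseteq> set p"
    using maximal_path_exists[OF g v] by blast
  then show ?thesis using that forest_maximal_path_degree[OF f] last_in_set by blast
qed

lemma is_graph_remove_vertex:
  assumes g: "is_graph V E" and F: "F \<subseteq> E" and z: "\<And>w. {z, w} \<notin> F"
  shows "is_graph (V - {z}) F"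
  unfolding is_graph_def
proof (intro conjI ballI)
  show "finite (V - {z})" using g is_graph_def by auto
next
  fix e assume "e \<in> F"
  then obtain a b where ab: "e = {a, b}" "a \<noteq> b" "a \<in> V" "b \<in> V"
    using g F unfolding is_graph_def by blast
  moreover have "{b, a} = e" using ab(1) by (simp add: insert_commute)
  ultimately have "a \<noteq> z" "b \<noteq> z" using z \<open>e \<in> F\<close> by metis+
  then show "\<exists>u v. e = {u, v} \<and> u \<noteq> v \<and> u \<in> V - {z} \<and> v \<in> V - {z}" using ab by blast
qed

lemma forest_induct [consumes 1, case_names empty isolated leaf]:
  assumes "is_forest V E"
    and empty: "P {} {}"
    and isolated: "\<And>V E z. is_forest V E \<Longrightarrow> z \<notin> V \<Longrightarrow> P V E \<Longrightarrow> P (insert z V) E"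
    and leaf: "\<And>V E z u. is_forest V E \<Longrightarrow> z \<notin> V \<Longrightarrow> u \<in> V \<Longrightarrow> P V E \<Longrightarrow>
      P (insert z V) (insert {z, u} E)"
  shows "P V E"
  using assms(1)
proof (induction "card V" arbitrary: V E)
  case 0
  then have "V = {}" unfolding is_forest_def is_graph_def by auto
  moreover have "E = {}" using 0 \<open>V = {}\<close> unfolding is_forest_def is_graph_def by auto
  ultimately show ?case using empty by simp
next
  case (Suc n)
  have g: "is_graph V E" using Suc.prems is_forest_def by auto
  have "V \<noteq> {}" using Suc.hyps(2) by auto
  then obtain z where z: "z \<in> V" "vertex_degree E z \<le> 1" using forest_low_degree_vertex[OF Suc.prems] by blast
  have V: "insert z (V - {z}) = V" and z': "z \<notin> V - {z}" using z by auto
  have n: "n = card (V - {z})" using Suc.hyps(2) z g unfolding is_graph_def by simp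
  have forest: "is_forest (V - {z}) F" if "F \<subseteq> E" "\<And>w. {z, w} \<notin> F" for F
    using is_forest_mono[OF Suc.prems is_graph_remove_vertex[OF g that] that(1)] .
  show ?case
  proof (cases "neighbours E z = {}")
    case True
    then have "is_forest (V - {z}) E" using forest[of E] unfolding neighbours_def by blast
    then have "P (insert z (V - {z})) E" using isolated z' Suc.hyps(1)[OF n] by blast
    then show ?thesis unfolding V .
  next
    case False
    then have "card (neighbours E z) = 1"
      using z(2) finite_neighbours[OF g] unfolding vertex_degree_def by (simp add: le_Suc_eq)
    then obtain u where u: "neighbours E z = {u}" by (rule card_1_singletonE)
    then have zu: "{z, u} \<in> E" unfolding neighbours_def by auto
    have u': "u \<in> V - {z}" using graph_edgeD[OF g zu] by auto
    define F where "F = E - {{z, u}}"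
    have "\<And>w. {z, w} \<notin> F" using u unfolding F_def neighbours_def by auto
    then have "is_forest (V - {z}) F" using forest[of F] unfolding F_def by blast
    then have "P (insert z (V - {z})) (insert {z, u} F)" using leaf z' u' Suc.hyps(1)[OF n] by blast
    moreover have "insert {z, u} F = E" using zu unfolding F_def by auto
    ultimately show ?thesis unfolding V by simp
  qed
qed

section \<open>Colourings and components of forests\<close>

definition q_colourings :: "nat \<Rightarrow> 'a set \<Rightarrow> 'a set set \<Rightarrow> ('a \<Rightarrow> nat) set" where
  "q_colourings q V E = {\<kappa> \<in> V \<rightarrow>\<^sub>E {1..q}. \<forall>u v. {u, v} \<in> E \<longrightarrow> \<kappa> u \<noteq> \<kappa> v}"

lemma finite_q_colourings: "finite V \<Longrightarrow> finite (q_colourings q V E)"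
  unfolding q_colourings_def by (rule finite_subset[OF _ finite_PiE[of V "\<lambda>_. {1..q}"]]) auto

lemma card_q_colourings_insert_vertex:
  assumes fin: "finite V" and z: "z \<notin> V" and g: "is_graph V E" and W: "W \<subseteq> V"
  shows "card (q_colourings q (insert z V) (E \<union> (\<lambda>w. {z, w}) ` W)) =
    (\<Sum>\<kappa>\<in>q_colourings q V E. card ({1..q} - \<kappa> ` W))"
proof -
  let ?E = "E \<union> (\<lambda>w. {z, w}) ` W"
  define A where "A = Sigma (q_colourings q V E) (\<lambda>\<kappa>. {1..q} - \<kappa> ` W)"
  have zW: "z \<notin> W" using z W by auto
  have old_edge: "u \<noteq> z" "v \<noteq> z" if "{u, v} \<in> E" for u v
    using graph_edgeD[OF g that] z by auto
  have "bij_betw (\<lambda>(\<kappa>, c). \<kappa>(z := c)) A (q_colourings q (insert z V) ?E)"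
  proof (rule bij_betwI[where g = "\<lambda>\<kappa>. (\<kappa>(z := undefined), \<kappa> z)"])
    show "(\<lambda>(\<kappa>, c). \<kappa>(z := c)) \<in> A \<rightarrow> q_colourings q (insert z V) ?E"
    proof
      fix x assume "x \<in> A"
      then obtain \<kappa> c where x: "x = (\<kappa>, c)" and k: "\<kappa> \<in> q_colourings q V E"
        and c: "c \<in> {1..q}" "c \<notin> \<kappa> ` W"
        unfolding A_def by auto
      have "\<kappa>(z := c) \<in> insert z V \<rightarrow>\<^sub>E {1..q}"
        using k c(1) z unfolding q_colourings_def by (auto simp: PiE_def extensional_def)
      moreover have "(\<kappa>(z := c)) u \<noteq> (\<kappa>(z := c)) v" if e: "{u, v} \<in> ?E" for u v
      proof (cases "{u, v} \<in> E")
        case True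
        then show ?thesis using k old_edge[OF True] unfolding q_colourings_def by simp
      next
        case False
        then obtain w where w: "w \<in> W" "{u, v} = {z, w}" using e by auto
        then have "(u = z \<and> v = w) \<or> (u = w \<and> v = z)" by (auto simp: doubleton_eq_iff)
        then show ?thesis using zW c(2) w(1) by auto
      qed
      ultimately show "(case x of (\<kappa>, c) \<Rightarrow> \<kappa>(z := c)) \<in> q_colourings q (insert z V) ?E"
        unfolding x q_colourings_def by auto
    qed
  next
    show "(\<lambda>\<kappa>. (\<kappa>(z := undefined), \<kappa> z)) \<in> q_colourings q (insert z V) ?E \<rightarrow> A"
    proof
      fix \<kappa> assume k: "\<kappa> \<in> q_colourings q (insert z V) ?E"
      have kP: "\<kappa> \<in> insert z V \<rightarrow>\<^sub>E {1..q}" and kp: "\<And>u v. {u, v} \<in> ?E \<Longrightarrow> \<kappa> u \<noteq> \<kappa> v"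
        using k unfolding q_colourings_def by auto
      have "\<kappa>(z := undefined) \<in> q_colourings q V E"
        using kP kp old_edge z unfolding q_colourings_def by (auto simp: PiE_def extensional_def)
      moreover have "\<kappa> z \<notin> (\<kappa>(z := undefined)) ` W"
      proof
        assume "\<kappa> z \<in> (\<kappa>(z := undefined)) ` W"
        then obtain w where "w \<in> W" "\<kappa> z = \<kappa> w" using zW by auto
        then show False using kp[of z w] by blast
      qed
      ultimately show "(\<kappa>(z := undefined), \<kappa> z) \<in> A" using kP unfolding A_def by auto
    qed
  next
    fix x assume "x \<in> A"
    then obtain \<kappa> c where x: "x = (\<kappa>, c)" and k: "\<kappa> \<in> q_colourings q V E" unfolding A_def by auto
    then have "\<kappa> z = undefined" using z unfolding q_colourings_def by (auto simp: PiE_def extensional_def)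
    then show "((case x of (\<kappa>, c) \<Rightarrow> \<kappa>(z := c))(z := undefined), (case x of (\<kappa>, c) \<Rightarrow> \<kappa>(z := c)) z) = x"
      unfolding x by auto
  qed auto
  then have "card (q_colourings q (insert z V) ?E) = card A" by (simp add: bij_betw_same_card)
  also have "\<dots> = (\<Sum>\<kappa>\<in>q_colourings q V E. card ({1..q} - \<kappa> ` W))"
    unfolding A_def using finite_q_colourings[OF fin] by (intro card_SigmaI) auto
  finally show ?thesis .
qed

lemma card_q_colourings_insert_isolated:
  assumes "finite V" "z \<notin> V" "is_graph V E"
  shows "card (q_colourings q (insert z V) E) = q * card (q_colourings q V E)"
  using card_q_colourings_insert_vertex[OF assms, of "{}" q] by simp

lemma card_q_colourings_insert_leaf:
  assumes fin: "finite V" and z: "z \<notin> V" and g: "is_graph V E" and u: "u \<in> V"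
  shows "card (q_colourings q (insert z V) (insert {z, u} E)) = (q - 1) * card (q_colourings q V E)"
proof -
  have "card (q_colourings q (insert z V) (insert {z, u} E)) =
      (\<Sum>\<kappa>\<in>q_colourings q V E. card ({1..q} - \<kappa> ` {u}))"
    using card_q_colourings_insert_vertex[OF fin z g, of "{u}" q] u by simp
  also have "\<dots> = (\<Sum>\<kappa>\<in>q_colourings q V E. q - 1)"
  proof (rule sum.cong)
    fix \<kappa> assume "\<kappa> \<in> q_colourings q V E"
    then have "\<kappa> u \<in> {1..q}" using u unfolding q_colourings_def by auto
    then show "card ({1..q} - \<kappa> ` {u}) = q - 1" by simp
  qed simp
  finally show ?thesis by simp
qed

lemma conn_rel_adj: "conn_rel V E = {(a, b). a \<in> V \<and> b \<in> V \<and> (adj E)\<^sup>*\<^sup>* a b}"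
  unfolding conn_rel_def adj_def[abs_def] ..

lemma reachable_commute: "(adj E)\<^sup>*\<^sup>* a b \<Longrightarrow> (adj E)\<^sup>*\<^sup>* b a"
  using symp_rtranclp[of "adj E"] by (auto simp: symp_def adj_commute)

lemma equiv_conn_rel: "equiv V (conn_rel V E)"
  unfolding conn_rel_adj
  by (rule equivI) (auto simp: refl_on_def sym_def trans_def intro: reachable_commute rtranclp_trans)

lemma reachable_from_isolated:
  assumes "\<And>w. {z, w} \<notin> E" and "(adj E)\<^sup>*\<^sup>* z b"
  shows "b = z"
  using assms(2) by induction (use assms(1) in \<open>auto simp: adj_def\<close>)

lemma reachable_insert_leaf:
  assumes z: "\<And>w. {z, w} \<notin> E" and uz: "u \<noteq> z" and az: "a \<noteq> z"
    and r: "(adj (insert {z, u} E))\<^sup>*\<^sup>* a b"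
  shows "(adj E)\<^sup>*\<^sup>* a (if b = z then u else b)"
  using r
proof (induction rule: rtranclp_induct)
  case base
  then show ?case using az by simp
next
  case (step c b)
  have cb: "{c, b} = {z, u} \<or> {c, b} \<in> E" using step(2) by (simp add: adj_def)
  consider "b = z" | "c = z" | "b \<noteq> z" "c \<noteq> z" by blast
  then show ?case
  proof cases
    case 1
    then have "c = u" using cb z[of c] uz by (auto simp: doubleton_eq_iff insert_commute)
    then show ?thesis using step(3) 1 uz by simp
  next
    case 2
    then have "b = u" using cb z[of b] by (auto simp: doubleton_eq_iff)
    then show ?thesis using step(3) 2 uz by simp
  next
    case 3
    then have "adj E c b" using cb by (auto simp: adj_def doubleton_eq_iff)
    then show ?thesis using step(3) 3 by (auto intro: rtranclp.rtrancl_into_rtrancl)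
  qed
qed

lemma num_components_insert_isolated:
  assumes fin: "finite V" and z: "z \<notin> V" and g: "is_graph V E"
  shows "num_components (insert z V) E = Suc (num_components V E)"
proof -
  let ?R = "conn_rel (insert z V) E" and ?R' = "conn_rel V E"
  have nz: "\<And>w. {z, w} \<notin> E" using graph_edgeD[OF g] z by blast
  have cz: "?R `` {z} = {z}"
    using reachable_from_isolated[OF nz] unfolding conn_rel_adj by auto
  have ca: "?R `` {a} = ?R' `` {a}" if a: "a \<in> V" for a
  proof -
    have "b \<noteq> z" if "(adj E)\<^sup>*\<^sup>* a b" for b
      using reachable_from_isolated[OF nz, of a] reachable_commute[OF that] a z by auto
    then show ?thesis using a unfolding conn_rel_adj by auto
  qed
  have q: "insert z V // ?R = insert {z} (V // ?R')"
    unfolding quotient_def using cz ca by auto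
  have "{z} \<notin> V // ?R'"
  proof
    assume "{z} \<in> V // ?R'"
    then have "{z} \<subseteq> V" using equiv_conn_rel[of V E] by (auto dest: in_quotient_imp_subset)
    then show False using z by simp
  qed
  moreover have "finite (V // ?R')"
    using fin by (intro finite_quotient) (auto simp: conn_rel_def)
  ultimately show ?thesis unfolding num_components_def q by simp
qed

lemma num_components_insert_leaf:
  assumes z: "z \<notin> V" and g: "is_graph V E" and u: "u \<in> V"
  shows "num_components (insert z V) (insert {z, u} E) = num_components V E"
proof -
  let ?V = "insert z V" and ?E = "insert {z, u} E"
  let ?R = "conn_rel ?V ?E" and ?R' = "conn_rel V E"
  have uz: "u \<noteq> z" using u z by auto
  have nz: "\<And>w. {z, w} \<notin> E" using graph_edgeD[OF g] z by blast
  have "adj E \<le> adj ?E" by (auto simp: adj_def)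
  then have mono: "(adj E)\<^sup>*\<^sup>* a b \<Longrightarrow> (adj ?E)\<^sup>*\<^sup>* a b" for a b
    using rtranclp_mono by (metis predicate2D)
  have eq: "(adj ?E)\<^sup>*\<^sup>* a b \<longleftrightarrow> (adj E)\<^sup>*\<^sup>* a b" if "a \<noteq> z" "b \<noteq> z" for a b
    using reachable_insert_leaf[OF nz uz that(1), of b] that mono by auto
  have eqv: "equiv ?V ?R" by (rule equiv_conn_rel)
  have "(z, u) \<in> ?R" using u unfolding conn_rel_adj by (auto simp: adj_def)
  then have clz: "?R `` {z} = ?R `` {u}" using eqv by (simp add: equiv_class_eq_iff)
  have cls: "?R `` {a} - {z} = ?R' `` {a}" if a: "a \<in> V" for a
  proof -
    have "a \<noteq> z" using a z by auto
    then show ?thesis using a z eq[of a] unfolding conn_rel_adj by force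
  qed
  have img: "(\<lambda>C. C - {z}) ` (?V // ?R) = V // ?R'"
  proof -
    have "(\<lambda>C. C - {z}) ` (?V // ?R) = (\<lambda>a. ?R `` {a} - {z}) ` ?V"
      unfolding quotient_def by auto
    also have "\<dots> = (\<lambda>a. ?R `` {a} - {z}) ` V" using clz u by auto
    also have "\<dots> = V // ?R'" unfolding quotient_def using cls by auto
    finally show ?thesis .
  qed
  have "inj_on (\<lambda>C. C - {z}) (?V // ?R)"
  proof (rule inj_onI)
    fix C1 C2 assume c1: "C1 \<in> ?V // ?R" and c2: "C2 \<in> ?V // ?R" and e: "C1 - {z} = C2 - {z}"
    have "C - {z} \<noteq> {}" if c: "C \<in> ?V // ?R" for C
    proof -
      obtain a where a: "a \<in> ?V" "C = ?R `` {a}" using c by (auto elim: quotientE)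
      have "a \<in> C" "u \<in> ?R `` {u}" using a eqv u by (auto simp: equiv_def refl_on_def)
      then show ?thesis using a clz uz by (cases "a = z") auto
    qed
    then have "C1 \<inter> C2 \<noteq> {}" using c1 e by blast
    then show "C1 = C2" using quotient_disj[OF eqv c1 c2] by blast
  qed
  then show ?thesis unfolding num_components_def using card_image img by metis
qed

lemma forest_card_vertices:
  assumes "is_forest V E"
  shows "card V = card E + num_components V E"
  using assms
proof (induction rule: forest_induct)
  case empty
  then show ?case by (simp add: num_components_def)
next
  case (isolated V E z)
  then have "is_graph V E" "finite V" unfolding is_forest_def is_graph_def by auto
  then show ?case using isolated num_components_insert_isolated[of V z E] by simp
next
  case (leaf V E z u)
  then have g: "is_graph V E" and "finite V" unfolding is_forest_def is_graph_def by auto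
  have "{z, u} \<notin> E" using graph_edgeD(1)[OF g] leaf(2) by blast
  then have "card (insert {z, u} E) = Suc (card E)" using finite_graph_edges[OF g] by simp
  then show ?case using leaf num_components_insert_leaf[OF leaf(2) g leaf(3)] \<open>finite V\<close> by simp
qed

lemma forest_card_q_colourings:
  assumes "is_forest V E"
  shows "card (q_colourings q V E) = q ^ num_components V E * (q - 1) ^ card E"
  using assms
proof (induction rule: forest_induct)
  case empty
  then show ?case by (simp add: num_components_def q_colourings_def)
next
  case (isolated V E z)
  then have "is_graph V E" "finite V" unfolding is_forest_def is_graph_def by auto
  then show ?case using isolated card_q_colourings_insert_isolated[of V z E q]
      num_components_insert_isolated[of V z E] by simp
next
  case (leaf V E z u)
  then have g: "is_graph V E" and "finite V" unfolding is_forest_def is_graph_def by auto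
  have "{z, u} \<notin> E" using graph_edgeD(1)[OF g] leaf(2) by blast
  then have "card (insert {z, u} E) = Suc (card E)" using finite_graph_edges[OF g] by simp
  then show ?case using leaf num_components_insert_leaf[OF leaf(2) g leaf(3)]
      card_q_colourings_insert_leaf[OF \<open>finite V\<close> leaf(2) g leaf(3)] by simp
qed

section \<open>The path forests \<open>P\<^sub>\<lambda>\<close>\<close>

lemma pathV_Sigma: "pathV la = (SIGMA i:{..<length la}. {..<la ! i})"
  unfolding pathV_def by auto

lemma pathE_neighbour:
  assumes "{(i, j), y} \<in> pathE la"
  shows "y = (i, Suc j) \<or> (0 < j \<and> y = (i, j - 1))"
proof -
  obtain i' j' where "{(i, j), y} = {(i', j'), (i', Suc j')}" using assms unfolding pathE_def by blast
  then have "((i, j) = (i', j') \<and> y = (i', Suc j')) \<or> ((i, j) = (i', Suc j') \<and> y = (i', j'))"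
    by (simp add: doubleton_eq_iff)
  then show ?thesis by auto
qed

lemma is_graph_path: "is_graph (pathV la) (pathE la)"
  unfolding is_graph_def
proof (intro conjI ballI)
  show "finite (pathV la)" unfolding pathV_Sigma by (intro finite_SigmaI) auto
next
  fix e assume "e \<in> pathE la"
  then obtain i j where ij: "e = {(i, j), (i, Suc j)}" "i < length la" "Suc j < la ! i"
    unfolding pathE_def by blast
  then have "(i, j) \<in> pathV la" "(i, Suc j) \<in> pathV la" unfolding pathV_def by simp_all
  then show "\<exists>u v. e = {u, v} \<and> u \<noteq> v \<and> u \<in> pathV la \<and> v \<in> pathV la"
    using ij(1) by (intro exI[of _ "(i, j)"] exI[of _ "(i, Suc j)"]) simp
qed

text \<open>A vertex of a cycle in \<open>P\<^sub>\<lambda>\<close> with maximal second coordinate would need two distinct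
  neighbours below it, but it has only one.\<close>
lemma is_forest_path: "is_forest (pathV la) (pathE la)"
  unfolding is_forest_iff
proof (intro conjI allI notI)
  show "is_graph (pathV la) (pathE la)" by (rule is_graph_path)
next
  fix vs assume c: "is_cycle (pathE la) vs"
  then have "snd ` set vs \<noteq> {}" unfolding is_cycle_def by auto
  then obtain x where x: "x \<in> set vs" "snd x = Max (snd ` set vs)"
    using Max_in[OF finite_imageI[OF finite_set]] by (metis imageE)
  obtain i J where xJ: "x = (i, J)" by (cases x)
  have below: "y = (i, J - 1)" if "y \<in> set vs" "{x, y} \<in> pathE la" for y
  proof -
    have "snd y \<le> J" using that(1) x(2) xJ by simp
    then show ?thesis using pathE_neighbour[of i J y la] that(2) xJ by auto
  qed
  obtain a b where "a \<noteq> b" "a \<in> set vs" "b \<in> set vs" "{x, a} \<in> pathE la" "{x, b} \<in> pathE la"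
    using is_cycle_two_neighbours[OF c x(1)] .
  then show False using below by metis
qed

lemma card_pathV: "card (pathV la) = sum_list la"
  unfolding pathV_Sigma by (simp add: sum_list_sum_nth atLeast0LessThan)

lemma card_pathE:
  assumes "0 \<notin> set la"
  shows "card (pathE la) + length la = sum_list la"
proof -
  define f where "f = (\<lambda>(i::nat, j::nat). {(i, j), (i, Suc j)})"
  define S where "S = (SIGMA i:{..<length la}. {..<la ! i - 1})"
  have "pathE la = f ` S"
  proof (intro equalityI subsetI)
    fix e assume "e \<in> pathE la"
    then obtain i j where "e = f (i, j)" "i < length la" "Suc j < la ! i"
      unfolding pathE_def f_def by auto
    then show "e \<in> f ` S" unfolding S_def by force
  next
    fix e assume "e \<in> f ` S"
    then obtain i j where "e = {(i, j), (i, Suc j)}" "i < length la" "Suc j < la ! i"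
      unfolding S_def f_def by auto
    then show "e \<in> pathE la" unfolding pathE_def by blast
  qed
  moreover have "inj_on f S"
    by (rule inj_onI) (auto simp: f_def doubleton_eq_iff split: prod.splits)
  ultimately have "card (pathE la) = (\<Sum>i<length la. la ! i - 1)"
    by (simp add: card_image S_def)
  also have "\<dots> = sum_list (map (\<lambda>x. x - 1) la)"
    by (simp add: sum_list_sum_nth atLeast0LessThan)
  moreover have "sum_list (map (\<lambda>x. x - 1) la) + length la = sum_list la"
    using assms by (induction la) auto
  ultimately show ?thesis by simp
qed

lemma num_components_path:
  assumes "0 \<notin> set la"
  shows "num_components (pathV la) (pathE la) = length la"
  using forest_card_vertices[OF is_forest_path, of la] card_pathE[OF assms] card_pathV[of la] by simp

lemma card_q_colourings_path:
  assumes "0 \<notin> set la"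
  shows "card (q_colourings q (pathV la) (pathE la)) = q ^ length la * (q - 1) ^ (sum_list la - length la)"
  using forest_card_q_colourings[OF is_forest_path, of q la] num_components_path[OF assms]
    card_pathE[OF assms] by (metis add_diff_cancel_right')

section \<open>Uniqueness of the tree polynomial\<close>

text \<open>The exponent vectors of the monomials of degree \<open>d\<close> in \<open>x\<^sub>1, \<dots>, x\<^sub>q\<close>: summing coefficients over
  them evaluates the degree \<open>d\<close> part at \<open>x\<^sub>1 = \<dots> = x\<^sub>q = 1\<close>.\<close>
definition colour_counts :: "nat \<Rightarrow> nat \<Rightarrow> (nat \<Rightarrow> nat) set" where
  "colour_counts q d = {\<alpha>. (\<forall>i. \<alpha> i \<noteq> 0 \<longrightarrow> i \<in> {1..q}) \<and> (\<Sum>i\<in>{1..q}. \<alpha> i) = d}"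

lemma finite_colour_counts: "finite (colour_counts q d)"
proof -
  have "colour_counts q d \<subseteq> (\<lambda>f i. if i \<in> {1..q} then f i else 0) ` ({1..q} \<rightarrow>\<^sub>E {0..d})"
  proof
    fix \<alpha> assume a: "\<alpha> \<in> colour_counts q d"
    have "\<alpha> i \<le> d" if "i \<in> {1..q}" for i
      using a member_le_sum[OF that, of \<alpha>] unfolding colour_counts_def by simp
    then have "restrict \<alpha> {1..q} \<in> {1..q} \<rightarrow>\<^sub>E {0..d}" by auto
    moreover have "\<alpha> = (\<lambda>i. if i \<in> {1..q} then restrict \<alpha> {1..q} i else 0)"
      using a unfolding colour_counts_def by (auto simp: fun_eq_iff)
    ultimately show "\<alpha> \<in> (\<lambda>f i. if i \<in> {1..q} then f i else 0) ` ({1..q} \<rightarrow>\<^sub>E {0..d})"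
      by blast
  qed
  then show ?thesis by (rule finite_subset) (intro finite_imageI finite_PiE; simp)
qed

lemma colour_class_sizes_in_colour_counts:
  assumes fin: "finite V" and \<kappa>: "\<kappa> \<in> V \<rightarrow>\<^sub>E {1..}"
  shows "(\<lambda>i. card {v \<in> V. \<kappa> v = i}) \<in> colour_counts q d \<longleftrightarrow> \<kappa> ` V \<subseteq> {1..q} \<and> d = card V"
proof -
  have ne: "card {v \<in> V. \<kappa> v = i} \<noteq> 0 \<longleftrightarrow> i \<in> \<kappa> ` V" for i
    using fin by (auto simp: card_eq_0_iff)
  have sum: "(\<Sum>i\<in>{1..q}. card {v \<in> V. \<kappa> v = i}) = card V" if "\<kappa> ` V \<subseteq> {1..q}"
    using sum.group[OF fin _ that, of "\<lambda>_. 1::nat"] by simp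
  have "(\<lambda>i. card {v \<in> V. \<kappa> v = i}) \<in> colour_counts q d \<longleftrightarrow>
      \<kappa> ` V \<subseteq> {1..q} \<and> (\<Sum>i\<in>{1..q}. card {v \<in> V. \<kappa> v = i}) = d"
    unfolding colour_counts_def using ne by blast
  then show ?thesis using sum by auto
qed

lemma sum_chrom_coeff_colour_counts:
  assumes fin: "finite V"
  shows "(\<Sum>\<alpha>\<in>colour_counts q d. chrom_coeff V E \<alpha>) =
    (if d = card V then card (q_colourings q V E) else 0)"
proof -
  let ?P = "proper_colourings V E" and ?c = "\<lambda>\<kappa> i. card {v \<in> V. \<kappa> v = i}"
  define T where "T = {\<kappa> \<in> ?P. ?c \<kappa> \<in> colour_counts q d}"
  have T: "T = (if d = card V then q_colourings q V E else {})"
  proof (intro set_eqI iffI)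
    fix \<kappa> assume "\<kappa> \<in> T"
    then have "\<kappa> \<in> V \<rightarrow>\<^sub>E {1..}" "?c \<kappa> \<in> colour_counts q d" "\<kappa> \<in> ?P"
      unfolding T_def proper_colourings_def by auto
    then show "\<kappa> \<in> (if d = card V then q_colourings q V E else {})"
      using colour_class_sizes_in_colour_counts[OF fin]
      unfolding proper_colourings_def q_colourings_def by (auto simp: PiE_iff)
  next
    fix \<kappa> assume k: "\<kappa> \<in> (if d = card V then q_colourings q V E else {})"
    then have "\<kappa> \<in> V \<rightarrow>\<^sub>E {1..}" "\<kappa> ` V \<subseteq> {1..q}" "d = card V"
      unfolding q_colourings_def by (auto split: if_splits simp: PiE_iff)
    then show "\<kappa> \<in> T" using k colour_class_sizes_in_colour_counts[OF fin]
      unfolding T_def proper_colourings_def q_colourings_def by (auto split: if_splits)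
  qed
  have "(\<Sum>\<alpha>\<in>colour_counts q d. chrom_coeff V E \<alpha>) = (\<Sum>\<alpha>\<in>colour_counts q d. card {\<kappa> \<in> T. ?c \<kappa> = \<alpha>})"
    unfolding chrom_coeff_def T_def by (intro sum.cong) (auto simp: fun_eq_iff intro: arg_cong[of _ _ card])
  also have "\<dots> = card T"
  proof -
    have "finite T" unfolding T using finite_q_colourings[OF fin] by simp
    moreover have "?c ` T \<subseteq> colour_counts q d" unfolding T_def by blast
    ultimately show ?thesis
      using sum.group[OF _ finite_colour_counts, of T ?c q d "\<lambda>_. 1::nat"] by simp
  qed
  finally show ?thesis using T by simp
qed

lemma poly_sum_x_pow_xm1_pow_eq_0:
  fixes b :: "nat \<Rightarrow> 'a::idom"
  assumes "(\<Sum>j\<le>d. smult (b j) ([:0, 1:] ^ j * [:-1, 1:] ^ (d - j))) = 0" and "k \<le> d"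
  shows "b k = 0"
  using assms
proof (induction d arbitrary: k)
  case (Suc d)
  define P where "P = (\<Sum>j\<le>d. smult (b j) ([:0, 1:] ^ j * [:-1, 1:] ^ (d - j)))"
  have "(\<Sum>j\<le>d. smult (b j) ([:0, 1:] ^ j * [:-1, 1:] ^ (Suc d - j))) = [:-1, 1:] * P"
    unfolding P_def sum_distrib_left by (intro sum.cong) (auto simp: Suc_diff_le algebra_simps)
  then have split: "smult (b (Suc d)) ([:0, 1:] ^ Suc d) + [:-1, 1:] * P = 0"
    using Suc.prems(1) by (simp add: add.commute)
  moreover have "poly (smult (b (Suc d)) ([:0, 1:] ^ Suc d) + [:-1, 1:] * P) 1 = b (Suc d)" by simp
  ultimately have "b (Suc d) = 0" by simp
  then have "[:-1, 1:] * P = 0" using split by (metis add_0 smult_0_left)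
  moreover have "[:-1, 1::'a:] \<noteq> 0" by simp
  ultimately have "P = 0" by (metis no_zero_divisors)
  then show ?case using Suc.IH[of k] Suc.prems(2) \<open>b (Suc d) = 0\<close> P_def by (cases "k = Suc d") auto
qed simp

lemma sum_x_pow_xm1_pow_eq_0:
  fixes b :: "nat \<Rightarrow> 'a::{idom, ring_char_0}"
  assumes vanish: "\<And>q::nat. q \<ge> 1 \<Longrightarrow> (\<Sum>j\<le>d. b j * of_nat q ^ j * (of_nat q - 1) ^ (d - j)) = 0"
    and "k \<le> d"
  shows "b k = 0"
proof (rule poly_sum_x_pow_xm1_pow_eq_0[OF _ \<open>k \<le> d\<close>], rule ccontr)
  define P where "P = (\<Sum>j\<le>d. smult (b j) ([:0, 1:] ^ j * [:-1, 1:] ^ (d - j)))"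
  assume "P \<noteq> 0"
  then have "finite {x. poly P x = 0}" by (rule poly_roots_finite)
  moreover have "of_nat ` {1..} \<subseteq> {x. poly P x = 0}"
    using vanish by (auto simp: P_def poly_sum mult.assoc)
  moreover have "infinite (of_nat ` {1::nat..} :: 'a set)"
    using finite_imageD[OF _ inj_on_subset[OF inj_of_nat]] infinite_Ici by blast
  ultimately show False using finite_subset by blast
qed

lemma length_le_sum_list: "0 \<notin> set la \<Longrightarrow> length la \<le> sum_list (la :: nat list)"
  by (induction la) auto

lemma path_expansion_specialise:
  assumes f: "is_forest V E" and pe: "path_expansion V E a" and q: "q \<ge> 1"
  shows "(if d = card V then of_nat q ^ num_components V E * (of_nat q - 1) ^ (d - num_components V E)
      else 0 :: rat) =
    (\<Sum>la | a la \<noteq> 0 \<and> sum_list la = d. a la * of_nat q ^ length la * (of_nat q - 1) ^ (d - length la))"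
proof -
  let ?S = "{la. a la \<noteq> 0}" and ?P = "\<lambda>la. q_colourings q (pathV la) (pathE la)"
  have finS: "finite ?S" and part: "\<And>la. la \<in> ?S \<Longrightarrow> 0 \<notin> set la"
    using pe unfolding path_expansion_def is_partition_def by auto
  have finV: "finite V" using f unfolding is_forest_def is_graph_def by simp
  have finP: "finite (pathV la)" for la using is_graph_path[of la] unfolding is_graph_def by simp
  have q1: "of_nat (q - 1) = (of_nat q - 1 :: rat)" using q by (simp add: of_nat_diff)
  have "(of_nat (if d = card V then card (q_colourings q V E) else 0) :: rat) =
      of_nat (\<Sum>\<alpha>\<in>colour_counts q d. chrom_coeff V E \<alpha>)"
    by (simp add: sum_chrom_coeff_colour_counts[OF finV])
  also have "\<dots> = (\<Sum>\<alpha>\<in>colour_counts q d. \<Sum>la\<in>?S. a la * of_nat (chrom_coeff (pathV la) (pathE la) \<alpha>))"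
    using pe unfolding path_expansion_def by simp
  also have "\<dots> = (\<Sum>la\<in>?S. a la * of_nat (\<Sum>\<alpha>\<in>colour_counts q d. chrom_coeff (pathV la) (pathE la) \<alpha>))"
    by (subst sum.swap) (simp add: sum_distrib_left)
  also have "\<dots> = (\<Sum>la\<in>?S. if sum_list la = d then a la * of_nat (card (?P la)) else 0)"
    by (intro sum.cong) (auto simp: sum_chrom_coeff_colour_counts[OF finP] card_pathV)
  also have "\<dots> = (\<Sum>la | a la \<noteq> 0 \<and> sum_list la = d. a la * of_nat (card (?P la)))"
    using finS by (simp add: sum.inter_filter[symmetric] conj_commute)
  also have "\<dots> = (\<Sum>la | a la \<noteq> 0 \<and> sum_list la = d.
      a la * of_nat q ^ length la * (of_nat q - 1) ^ (d - length la))"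
    using part q by (intro sum.cong) (auto simp: card_q_colourings_path of_nat_diff)
  finally show ?thesis
    using forest_card_q_colourings[OF f, of q] forest_card_vertices[OF f] q1 by (auto split: if_splits)
qed

definition graded_coeff :: "(nat list \<Rightarrow> rat) \<Rightarrow> nat \<Rightarrow> nat \<Rightarrow> rat" where
  "graded_coeff a d k = (\<Sum>la | a la \<noteq> 0 \<and> sum_list la = d \<and> length la = k. a la)"

lemma sum_group_length:
  fixes g :: "'a list \<Rightarrow> 'b::semiring_0"
  assumes "finite T" "\<And>la. la \<in> T \<Longrightarrow> length la \<le> d"
  shows "(\<Sum>la\<in>T. g la * h (length la)) = (\<Sum>k\<le>d. (\<Sum>la | la \<in> T \<and> length la = k. g la) * h k)"
proof -
  have "(\<Sum>la\<in>T. g la * h (length la)) = (\<Sum>k\<le>d. \<Sum>la | la \<in> T \<and> length la = k. g la * h (length la))"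
    using assms by (intro sum.group[symmetric]) auto
  also have "\<dots> = (\<Sum>k\<le>d. (\<Sum>la | la \<in> T \<and> length la = k. g la) * h k)"
    by (simp add: sum_distrib_right)
  finally show ?thesis .
qed

lemma path_expansion_graded_coeff:
  assumes f: "is_forest V E" and pe: "path_expansion V E a"
  shows "graded_coeff a d k = (if d = card V \<and> k = num_components V E then 1 else 0)"
proof -
  let ?m = "num_components V E" and ?T = "{la. a la \<noteq> 0 \<and> sum_list la = d}"
  have finT: "finite ?T" using pe unfolding path_expansion_def by simp
  have len: "length la \<le> d" if "la \<in> ?T" for la
    using that pe length_le_sum_list unfolding path_expansion_def is_partition_def by auto
  have m: "?m \<le> card V" using forest_card_vertices[OF f] by simp
  have T: "{la. la \<in> ?T \<and> length la = j} = {la. a la \<noteq> 0 \<and> sum_list la = d \<and> length la = j}" for j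
    by auto
  show ?thesis
  proof (cases "k \<le> d")
    case False
    then have "{la. a la \<noteq> 0 \<and> sum_list la = d \<and> length la = k} = {}" using len by fastforce
    then have "graded_coeff a d k = 0" unfolding graded_coeff_def by (simp only: sum.empty)
    then show ?thesis using False m by simp
  next
    case True
    define b where "b j = graded_coeff a d j - (if d = card V \<and> j = ?m then 1 else 0)" for j
    have "b k = 0"
    proof (rule sum_x_pow_xm1_pow_eq_0[OF _ True])
      fix q :: nat assume "q \<ge> 1"
      let ?h = "\<lambda>j. of_nat q ^ j * (of_nat q - 1) ^ (d - j) :: rat"
      have "(\<Sum>j\<le>d. graded_coeff a d j * ?h j) = (\<Sum>la\<in>?T. a la * ?h (length la))"
        unfolding graded_coeff_def T[symmetric] by (rule sum_group_length[OF finT len, symmetric])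
      also have "\<dots> = (if d = card V then ?h ?m else 0)"
        using path_expansion_specialise[OF f pe \<open>q \<ge> 1\<close>, of d] by (simp add: mult.assoc)
      also have "\<dots> = (\<Sum>j\<le>d. (if d = card V \<and> j = ?m then 1 else 0) * ?h j)"
        using m by (auto simp: if_distrib[of "\<lambda>x. x * _"] sum.delta cong: if_cong)
      finally show "(\<Sum>j\<le>d. b j * of_nat q ^ j * (of_nat q - 1) ^ (d - j)) = 0"
        unfolding b_def by (simp add: algebra_simps sum_subtractf)
    qed
    then show ?thesis unfolding b_def by simp
  qed
qed

lemma coeff_tree_poly_of:
  assumes "finite {la. a la \<noteq> 0}"
  shows "coeff (tree_poly_of a) k = (\<Sum>la | a la \<noteq> 0 \<and> length la = k. a la)"
proof -
  have "coeff (tree_poly_of a) k = (\<Sum>la | a la \<noteq> 0. if length la = k then a la else 0)"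
    unfolding tree_poly_of_def coeff_sum coeff_monom by (intro sum.cong) auto
  also have "\<dots> = (\<Sum>la | a la \<noteq> 0 \<and> length la = k. a la)"
    using assms by (simp add: sum.inter_filter[symmetric])
  finally show ?thesis .
qed

lemma tree_poly_of_forest:
  assumes f: "is_forest V E" and pe: "path_expansion V E a"
  shows "tree_poly_of a = monom 1 (num_components V E)"
proof (rule poly_eqI)
  fix k
  let ?S = "{la. a la \<noteq> 0}"
  let ?D = "insert (card V) (sum_list ` ?S)"
  have finS: "finite ?S" using pe unfolding path_expansion_def by simp
  have "coeff (tree_poly_of a) k = (\<Sum>la | a la \<noteq> 0 \<and> length la = k. a la)"
    by (rule coeff_tree_poly_of[OF finS])
  also have "\<dots> = (\<Sum>d\<in>?D. graded_coeff a d k)"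
    unfolding graded_coeff_def using finS
    by (subst sum.group[symmetric, of _ ?D sum_list]) (auto intro!: sum.cong)
  also have "\<dots> = (\<Sum>d\<in>?D. if d = card V \<and> k = num_components V E then 1 else 0)"
    using path_expansion_graded_coeff[OF f pe] by simp
  also have "\<dots> = coeff (monom 1 (num_components V E)) k"
    using finS by (simp add: sum.delta coeff_monom)
  finally show "coeff (tree_poly_of a) k = coeff (monom 1 (num_components V E)) k" .
qed

section \<open>Existence of the path expansion\<close>

definition csf :: "'a set \<Rightarrow> 'a set set \<Rightarrow> (nat \<Rightarrow> nat) \<Rightarrow> rat" where
  "csf V E \<alpha> = of_nat (chrom_coeff V E \<alpha>)"

definition in_path_span :: "((nat \<Rightarrow> nat) \<Rightarrow> rat) \<Rightarrow> bool" where
  "in_path_span f \<longleftrightarrow> (\<exists>a. finite {la. a la \<noteq> 0} \<and> (\<forall>la. a la \<noteq> 0 \<longrightarrow> is_partition la) \<and>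
     (\<forall>\<alpha>. f \<alpha> = (\<Sum>la | a la \<noteq> 0. a la * csf (pathV la) (pathE la) \<alpha>)))"

lemma in_path_span_iff_path_expansion: "in_path_span (csf V E) \<longleftrightarrow> (\<exists>a. path_expansion V E a)"
  unfolding in_path_span_def path_expansion_def csf_def ..

lemma in_path_spanI:
  assumes "finite S" "\<And>la. la \<in> S \<Longrightarrow> is_partition la"
    and "\<And>\<alpha>. f \<alpha> = (\<Sum>la\<in>S. a la * csf (pathV la) (pathE la) \<alpha>)"
  shows "in_path_span f"
proof -
  define a' where "a' la = (if la \<in> S then a la else 0)" for la
  have sub: "{la. a' la \<noteq> 0} \<subseteq> S" unfolding a'_def by auto
  have "f \<alpha> = (\<Sum>la | a' la \<noteq> 0. a' la * csf (pathV la) (pathE la) \<alpha>)" for \<alpha>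
  proof -
    have "(\<Sum>la | a' la \<noteq> 0. a' la * csf (pathV la) (pathE la) \<alpha>) =
        (\<Sum>la\<in>S. a' la * csf (pathV la) (pathE la) \<alpha>)"
      by (rule sum.mono_neutral_left[OF assms(1) sub]) auto
    then show ?thesis using assms(3) unfolding a'_def by simp
  qed
  then show ?thesis unfolding in_path_span_def using sub assms(1,2) finite_subset by blast
qed

lemma in_path_spanE:
  assumes "in_path_span f"
  obtains S a where "finite S" "\<And>la. la \<in> S \<Longrightarrow> is_partition la"
    "\<And>\<alpha>. f \<alpha> = (\<Sum>la\<in>S. a la * csf (pathV la) (pathE la) \<alpha>)"
proof -
  obtain a where "finite {la. a la \<noteq> 0}" "\<forall>la. a la \<noteq> 0 \<longrightarrow> is_partition la"
    "\<forall>\<alpha>. f \<alpha> = (\<Sum>la | a la \<noteq> 0. a la * csf (pathV la) (pathE la) \<alpha>)"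
    using assms unfolding in_path_span_def by blast
  then show thesis using that[of "{la. a la \<noteq> 0}" a] by simp
qed

lemma in_path_span_lincomb:
  assumes "in_path_span f" "in_path_span g"
  shows "in_path_span (\<lambda>\<alpha>. c * f \<alpha> + d * g \<alpha>)"
proof -
  obtain S a where S: "finite S" "\<And>la. la \<in> S \<Longrightarrow> is_partition la"
    "\<And>\<alpha>. f \<alpha> = (\<Sum>la\<in>S. a la * csf (pathV la) (pathE la) \<alpha>)"
    using assms(1) by (rule in_path_spanE) (rule that)
  obtain T b where T: "finite T" "\<And>la. la \<in> T \<Longrightarrow> is_partition la"
    "\<And>\<alpha>. g \<alpha> = (\<Sum>la\<in>T. b la * csf (pathV la) (pathE la) \<alpha>)"
    using assms(2) by (rule in_path_spanE) (rule that)
  define a' where "a' la = (if la \<in> S then a la else 0)" for la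
  define b' where "b' la = (if la \<in> T then b la else 0)" for la
  have "f \<alpha> = (\<Sum>la\<in>S \<union> T. a' la * csf (pathV la) (pathE la) \<alpha>)" for \<alpha>
    using S(3) unfolding a'_def by (subst sum.mono_neutral_right[of "S \<union> T" S]) (auto simp: S(1) T(1))
  moreover have "g \<alpha> = (\<Sum>la\<in>S \<union> T. b' la * csf (pathV la) (pathE la) \<alpha>)" for \<alpha>
    using T(3) unfolding b'_def by (subst sum.mono_neutral_right[of "S \<union> T" T]) (auto simp: S(1) T(1))
  ultimately show ?thesis
    using S(1,2) T(1,2)
    by (intro in_path_spanI[where S = "S \<union> T" and a = "\<lambda>la. c * a' la + d * b' la"])
      (auto simp: sum.distrib sum_distrib_left algebra_simps)
qed

lemma in_path_span_path: "is_partition la \<Longrightarrow> in_path_span (csf (pathV la) (pathE la))"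
  by (rule in_path_spanI[where S = "{la}" and a = "\<lambda>_. 1"]) auto

definition colour_class :: "'a set \<Rightarrow> 'a set set \<Rightarrow> (nat \<Rightarrow> nat) \<Rightarrow> ('a \<Rightarrow> nat) set" where
  "colour_class V E \<alpha> = {\<kappa> \<in> proper_colourings V E. \<forall>i. card {v \<in> V. \<kappa> v = i} = \<alpha> i}"

lemma chrom_coeff_colour_class: "chrom_coeff V E \<alpha> = card (colour_class V E \<alpha>)"
  unfolding chrom_coeff_def colour_class_def ..

lemma finite_colour_class:
  assumes fin: "finite V"
  shows "finite (colour_class V E \<alpha>)"
proof (cases "colour_class V E \<alpha> = {}")
  case False
  then obtain \<kappa>\<^sub>0 where k0: "\<kappa>\<^sub>0 \<in> colour_class V E \<alpha>" by auto
  have "colour_class V E \<alpha> \<subseteq> V \<rightarrow>\<^sub>E \<kappa>\<^sub>0 ` V"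
  proof
    fix \<kappa> assume k: "\<kappa> \<in> colour_class V E \<alpha>"
    have "\<kappa> v \<in> \<kappa>\<^sub>0 ` V" if v: "v \<in> V" for v
    proof -
      have "card {u \<in> V. \<kappa> u = \<kappa> v} \<noteq> 0" using v fin by (auto simp: card_eq_0_iff)
      then have "card {u \<in> V. \<kappa>\<^sub>0 u = \<kappa> v} \<noteq> 0" using k k0 unfolding colour_class_def by simp
      then have "{u \<in> V. \<kappa>\<^sub>0 u = \<kappa> v} \<noteq> {}" by (metis card.empty)
      then obtain u where "u \<in> V" "\<kappa>\<^sub>0 u = \<kappa> v" by blast
      then show ?thesis by (metis imageI)
    qed
    then show "\<kappa> \<in> V \<rightarrow>\<^sub>E \<kappa>\<^sub>0 ` V"
      using k unfolding colour_class_def proper_colourings_def by (auto simp: PiE_iff)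
  qed
  then show ?thesis by (rule finite_subset) (use fin in \<open>auto intro!: finite_PiE\<close>)
qed simp

definition graph_iso :: "('a \<Rightarrow> 'b) \<Rightarrow> 'a set \<Rightarrow> 'a set set \<Rightarrow> 'b set \<Rightarrow> 'b set set \<Rightarrow> bool" where
  "graph_iso h V1 E1 V2 E2 \<longleftrightarrow> bij_betw h V1 V2 \<and> E2 = (\<lambda>e. h ` e) ` E1"

lemma graph_iso_inv:
  assumes g: "is_graph V1 E1" and iso: "graph_iso h V1 E1 V2 E2"
  shows "graph_iso (inv_into V1 h) V2 E2 V1 E1"
proof -
  have h: "bij_betw h V1 V2" and E2: "E2 = (\<lambda>e. h ` e) ` E1" using iso unfolding graph_iso_def by auto
  have "inv_into V1 h ` h ` e = e" if "e \<in> E1" for e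
    using that g h unfolding is_graph_def bij_betw_def by (auto intro: inv_into_image_cancel)
  then have "E1 = (\<lambda>e. inv_into V1 h ` e) ` E2" unfolding E2 image_image by simp
  then show ?thesis using bij_betw_inv_into[OF h] unfolding graph_iso_def by simp
qed

lemma colour_class_iso:
  assumes g: "is_graph V1 E1" and iso: "graph_iso h V1 E1 V2 E2" and \<kappa>: "\<kappa> \<in> colour_class V2 E2 \<alpha>"
  shows "restrict (\<kappa> \<circ> h) V1 \<in> colour_class V1 E1 \<alpha>"
proof -
  have h: "bij_betw h V1 V2" and E2: "E2 = (\<lambda>e. h ` e) ` E1" using iso unfolding graph_iso_def by auto
  have "restrict (\<kappa> \<circ> h) V1 \<in> V1 \<rightarrow>\<^sub>E {1..}"
    using \<kappa> bij_betwE[OF h] unfolding colour_class_def proper_colourings_def by auto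
  moreover have "restrict (\<kappa> \<circ> h) V1 u \<noteq> restrict (\<kappa> \<circ> h) V1 v" if e: "{u, v} \<in> E1" for u v
  proof -
    have "h ` {u, v} \<in> E2" using e unfolding E2 by (rule imageI)
    then have "{h u, h v} \<in> E2" by simp
    then show ?thesis
      using \<kappa> graph_edgeD[OF g e] unfolding colour_class_def proper_colourings_def by auto
  qed
  moreover have "card {v \<in> V1. restrict (\<kappa> \<circ> h) V1 v = i} = \<alpha> i" for i
  proof -
    have "bij_betw h {v \<in> V1. \<kappa> (h v) = i} {w \<in> V2. \<kappa> w = i}"
      using h unfolding bij_betw_def inj_on_def by auto
    then have "card {v \<in> V1. \<kappa> (h v) = i} = \<alpha> i"
      using \<kappa> unfolding colour_class_def by (simp add: bij_betw_same_card)
    moreover have "{v \<in> V1. restrict (\<kappa> \<circ> h) V1 v = i} = {v \<in> V1. \<kappa> (h v) = i}" by auto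
    ultimately show ?thesis by simp
  qed
  ultimately show ?thesis unfolding colour_class_def proper_colourings_def by auto
qed

lemma card_colour_class_iso_le:
  assumes fin: "finite V1" and g: "is_graph V1 E1" and iso: "graph_iso h V1 E1 V2 E2"
  shows "card (colour_class V2 E2 \<alpha>) \<le> card (colour_class V1 E1 \<alpha>)"
proof (rule card_inj_on_le[OF _ _ finite_colour_class[OF fin]])
  have hV: "h ` V1 = V2" using iso unfolding graph_iso_def bij_betw_def by auto
  show "inj_on (\<lambda>\<kappa>. restrict (\<kappa> \<circ> h) V1) (colour_class V2 E2 \<alpha>)"
  proof (rule inj_onI)
    fix \<kappa> \<kappa>' assume k: "\<kappa> \<in> colour_class V2 E2 \<alpha>" "\<kappa>' \<in> colour_class V2 E2 \<alpha>"
      and eq: "restrict (\<kappa> \<circ> h) V1 = restrict (\<kappa>' \<circ> h) V1"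
    have "\<kappa> w = \<kappa>' w" if w: "w \<in> V2" for w
    proof -
      obtain v where "v \<in> V1" "w = h v" using w hV by auto
      then show ?thesis using fun_cong[OF eq, of v] by simp
    qed
    moreover have "\<kappa> \<in> extensional V2" "\<kappa>' \<in> extensional V2"
      using k unfolding colour_class_def proper_colourings_def by (auto simp: PiE_iff)
    ultimately show "\<kappa> = \<kappa>'" by (intro extensionalityI[of _ V2]) auto
  qed
  show "(\<lambda>\<kappa>. restrict (\<kappa> \<circ> h) V1) ` colour_class V2 E2 \<alpha> \<subseteq> colour_class V1 E1 \<alpha>"
    using colour_class_iso[OF g iso] by blast
qed

lemma chrom_coeff_iso:
  assumes g1: "is_graph V1 E1" and g2: "is_graph V2 E2" and iso: "graph_iso h V1 E1 V2 E2"
  shows "chrom_coeff V1 E1 \<alpha> = chrom_coeff V2 E2 \<alpha>"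
  unfolding chrom_coeff_colour_class
proof (rule antisym)
  have "finite V1" "finite V2" using g1 g2 unfolding is_graph_def by auto
  then show "card (colour_class V2 E2 \<alpha>) \<le> card (colour_class V1 E1 \<alpha>)"
    and "card (colour_class V1 E1 \<alpha>) \<le> card (colour_class V2 E2 \<alpha>)"
    using card_colour_class_iso_le[OF _ g1 iso] card_colour_class_iso_le[OF _ g2 graph_iso_inv[OF g1 iso]]
    by auto
qed

definition path_edges :: "'a list \<Rightarrow> 'a set set" where
  "path_edges p = {{p ! j, p ! Suc j} | j. Suc j < length p}"

lemma linear_forest_path_neighbour:
  assumes f: "is_forest V E" and dg: "\<forall>v\<in>V. vertex_degree E v \<le> 2"
    and p: "is_path E p" "p \<noteq> []" "set p \<subseteq> V" "vertex_degree E (hd p) \<le> 1" "neighbours E (last p) \<subseteq> set p"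
    and i: "i < length p" and u: "u \<in> neighbours E (p ! i)"
  shows "(Suc i < length p \<and> u = p ! Suc i) \<or> (0 < i \<and> u = p ! (i - 1))"
proof (cases "Suc i = length p")
  case True
  then have "i = length p - 1" by simp
  then have "p ! i = last p" using p(2) by (simp add: last_conv_nth)
  then have "length p \<ge> 2 \<and> u = p ! (length p - 2)" using forest_maximal_path_end[OF f p(1,2,5)] u by simp
  moreover have "length p - 2 = i - 1" using True by simp
  ultimately show ?thesis using True by auto
next
  case False
  then have si: "Suc i < length p" using i by simp
  have g: "is_graph V E" using f is_forest_def by auto
  have next_nb: "p ! Suc i \<in> neighbours E (p ! i)"
    using is_path_edge[OF p(1) si] unfolding neighbours_def by simp
  show ?thesis
  proof (cases i)
    case 0
    have "card (neighbours E (p ! 0)) \<le> 1" using p(2,4) by (simp add: vertex_degree_def hd_conv_nth)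
    then have "u = p ! Suc 0"
      using next_nb u 0 card_le_Suc0_iff_eq[OF finite_neighbours[OF g]] by (metis One_nat_def)
    then show ?thesis using si 0 by simp
  next
    case (Suc i')
    have prev_nb: "p ! i' \<in> neighbours E (p ! i)"
      using is_path_edge[OF p(1), of i'] si Suc unfolding neighbours_def by (simp add: insert_commute)
    have "p ! i' \<noteq> p ! Suc i" using p(1) si Suc unfolding is_path_def by (simp add: nth_eq_iff_index_eq)
    then have two: "card {p ! i', p ! Suc i} = 2" by simp
    have "p ! i \<in> V" using p(3) i by (meson nth_mem subsetD)
    then have "card (neighbours E (p ! i)) \<le> 2" using dg unfolding vertex_degree_def by blast
    then have "neighbours E (p ! i) = {p ! i', p ! Suc i}"
      using prev_nb next_nb two finite_neighbours[OF g]
      by (metis card_subset_eq le_antisym card_mono empty_subsetI insert_subset)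
    then show ?thesis using u si Suc by auto
  qed
qed

lemma linear_forest_split_path:
  assumes f: "is_forest V E" and dg: "\<forall>v\<in>V. vertex_degree E v \<le> 2"
    and p: "is_path E p" "p \<noteq> []" "set p \<subseteq> V" "vertex_degree E (hd p) \<le> 1" "neighbours E (last p) \<subseteq> set p"
  shows "E = path_edges p \<union> {e \<in> E. e \<inter> set p = {}}"
proof (intro equalityI subsetI)
  fix e assume e: "e \<in> E"
  show "e \<in> path_edges p \<union> {e \<in> E. e \<inter> set p = {}}"
  proof (cases "e \<inter> set p = {}")
    case False
    have g: "is_graph V E" using f is_forest_def by auto
    then obtain x y where xy: "e = {x, y}" "x \<in> set p"
      using e False unfolding is_graph_def by (metis Int_emptyI insert_commute insertE singletonD)
    then obtain i where i: "i < length p" "p ! i = x" by (auto simp: in_set_conv_nth)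
    have "y \<in> neighbours E (p ! i)" using e xy i unfolding neighbours_def by simp
    then have "(Suc i < length p \<and> y = p ! Suc i) \<or> (0 < i \<and> y = p ! (i - 1))"
      using linear_forest_path_neighbour[OF f dg p i(1)] by blast
    then show ?thesis
    proof
      assume "Suc i < length p \<and> y = p ! Suc i"
      then show ?thesis using xy i unfolding path_edges_def by blast
    next
      assume h: "0 < i \<and> y = p ! (i - 1)"
      then have "e = {p ! (i - 1), p ! Suc (i - 1)}" "Suc (i - 1) < length p"
        using xy i by (auto simp: insert_commute)
      then show ?thesis unfolding path_edges_def by blast
    qed
  qed (use e in blast)
qed (use is_path_edge[OF assms(3)] in \<open>auto simp: path_edges_def\<close>)

lemma linear_forest_decomposition:
  assumes "is_forest V E" "\<forall>v\<in>V. vertex_degree E v \<le> 2"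
  shows "\<exists>ps. distinct (concat ps) \<and> set (concat ps) = V \<and> [] \<notin> set ps \<and> E = (\<Union>p\<in>set ps. path_edges p)"
  using assms
proof (induction "card V" arbitrary: V E rule: less_induct)
  case less
  have f: "is_forest V E" and dg: "\<forall>v\<in>V. vertex_degree E v \<le> 2" using less.prems by auto
  have g: "is_graph V E" using f is_forest_def by auto
  show ?case
  proof (cases "V = {}")
    case True
    then have "E = {}" using g unfolding is_graph_def by auto
    then show ?thesis using True by (intro exI[of _ "[]"]) simp
  next
    case False
    obtain z where z: "z \<in> V" "vertex_degree E z \<le> 1" using forest_low_degree_vertex[OF f False] by blast
    obtain p where p: "is_path E p" "p \<noteq> []" "hd p = z" "set p \<subseteq> V" "neighbours E (last p) \<subseteq> set p"
      using maximal_path_exists[OF g z(1)] by blast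
    define V' where "V' = V - set p"
    define E' where "E' = {e \<in> E. e \<inter> set p = {}}"
    have g': "is_graph V' E'"
      using g unfolding is_graph_def V'_def E'_def by fastforce
    have f': "is_forest V' E'" using is_forest_mono[OF f g'] unfolding E'_def by blast
    have "vertex_degree E' v \<le> vertex_degree E v" for v
      unfolding vertex_degree_def using finite_neighbours[OF g]
      by (rule card_mono) (auto simp: neighbours_def E'_def)
    then have dg': "\<forall>v\<in>V'. vertex_degree E' v \<le> 2" using dg unfolding V'_def by (meson DiffD1 order_trans)
    have "z \<in> set p" using p(2,3) by auto
    then have "V' \<subset> V" using z(1) unfolding V'_def by blast
    then have "card V' < card V" using g unfolding is_graph_def by (simp add: psubset_card_mono)
    then obtain ps where ps: "distinct (concat ps)" "set (concat ps) = V'" "[] \<notin> set ps"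
      "E' = (\<Union>p\<in>set ps. path_edges p)"
      using less.hyps f' dg' by blast
    have "E = path_edges p \<union> E'"
      unfolding E'_def using linear_forest_split_path[OF f dg p(1,2,4) _ p(5)] z(2) p(3) by blast
    moreover have "distinct p" using p(1) unfolding is_path_def by simp
    ultimately show ?thesis
      using ps p(2,4) unfolding V'_def by (intro exI[of _ "p # ps"]) auto
  qed
qed

lemma distinct_concat_nth_nth_inj:
  assumes d: "distinct (concat ps)" and ne: "[] \<notin> set ps"
    and i: "i < length ps" "j < length (ps ! i)" and i': "i' < length ps" "j' < length (ps ! i')"
    and eq: "ps ! i ! j = ps ! i' ! j'"
  shows "i = i' \<and> j = j'"
proof -
  have dd: "distinct ps" "\<forall>ys\<in>set ps. distinct ys"
    "\<forall>ys zs. ys \<in> set ps \<and> zs \<in> set ps \<and> ys \<noteq> zs \<longrightarrow> set ys \<inter> set zs = {}"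
    using d ne unfolding distinct_concat_iff by (auto simp: removeAll_id)
  have "set (ps ! i) \<inter> set (ps ! i') \<noteq> {}" using i i' eq by (metis disjoint_iff nth_mem)
  then have ii: "i = i'" using dd(1,3) i i' by (metis nth_eq_iff_index_eq nth_mem)
  then have "j = j'" using dd(2) eq i i' by (simp add: nth_eq_iff_index_eq)
  then show ?thesis using ii by simp
qed

lemma graph_iso_path_union:
  assumes d: "distinct (concat ps)" and ne: "[] \<notin> set ps"
  shows "graph_iso (\<lambda>(i, j). ps ! i ! j) (pathV (map length ps)) (pathE (map length ps))
    (set (concat ps)) (\<Union>p\<in>set ps. path_edges p)"
  unfolding graph_iso_def
proof
  let ?la = "map length ps" and ?h = "\<lambda>(i, j). ps ! i ! j"
  show "bij_betw ?h (pathV ?la) (set (concat ps))"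
    unfolding bij_betw_def
  proof
    show "inj_on ?h (pathV ?la)"
      using distinct_concat_nth_nth_inj[OF d ne] by (auto simp: inj_on_def pathV_def)
    show "?h ` pathV ?la = set (concat ps)"
    proof (intro equalityI subsetI)
      fix v assume "v \<in> set (concat ps)"
      then obtain i j where "i < length ps" "j < length (ps ! i)" "v = ps ! i ! j"
        by (auto simp: in_set_conv_nth)
      then show "v \<in> ?h ` pathV ?la" unfolding pathV_def by force
    next
      fix v assume "v \<in> ?h ` pathV ?la"
      then obtain i j where "i < length ps" "j < length (ps ! i)" "v = ps ! i ! j"
        unfolding pathV_def by auto
      then have "ps ! i \<in> set ps" "v \<in> set (ps ! i)" by simp_all
      then show "v \<in> set (concat ps)" by auto
    qed
  qed
  show "(\<Union>p\<in>set ps. path_edges p) = (\<lambda>e. ?h ` e) ` pathE ?la"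
  proof (intro equalityI subsetI)
    fix e assume "e \<in> (\<Union>p\<in>set ps. path_edges p)"
    then obtain i j where ij: "i < length ps" "Suc j < length (ps ! i)" "e = {ps ! i ! j, ps ! i ! Suc j}"
      unfolding path_edges_def by (auto simp: in_set_conv_nth)
    then have "Suc j < ?la ! i" "i < length ?la" by simp_all
    then have "{(i, j), (i, Suc j)} \<in> pathE ?la" unfolding pathE_def by blast
    moreover have "e = ?h ` {(i, j), (i, Suc j)}" using ij by simp
    ultimately show "e \<in> (\<lambda>e. ?h ` e) ` pathE ?la" by blast
  next
    fix e assume "e \<in> (\<lambda>e. ?h ` e) ` pathE ?la"
    then obtain i j where ij: "i < length ps" "Suc j < length (ps ! i)" "e = {ps ! i ! j, ps ! i ! Suc j}"
      unfolding pathE_def by auto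
    then show "e \<in> (\<Union>p\<in>set ps. path_edges p)" unfolding path_edges_def by (auto intro!: bexI[of _ "ps ! i"])
  qed
qed

lemma csf_linear_forest_in_path_span:
  assumes f: "is_forest V E" and dg: "\<forall>v\<in>V. vertex_degree E v \<le> 2"
  shows "in_path_span (csf V E)"
proof -
  have g: "is_graph V E" using f is_forest_def by auto
  obtain ps where ps: "distinct (concat ps)" "set (concat ps) = V" "[] \<notin> set ps"
    "E = (\<Union>p\<in>set ps. path_edges p)"
    using linear_forest_decomposition[OF f dg] by blast
  define ps' where "ps' = rev (sort_key length ps)"
  have set': "set ps' = set ps" and "distinct ps' \<longleftrightarrow> distinct ps" unfolding ps'_def by simp_all
  then have ps': "distinct (concat ps')" "set (concat ps') = V" "[] \<notin> set ps'"
    "E = (\<Union>p\<in>set ps'. path_edges p)"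
    using ps by (auto simp: distinct_concat_iff removeAll_id)
  have "is_partition (map length ps')"
    using ps'(3) unfolding is_partition_def ps'_def by (auto simp: sorted_wrt_rev rev_map[symmetric])
  moreover have "csf (pathV (map length ps')) (pathE (map length ps')) = csf V E"
    using chrom_coeff_iso[OF is_graph_path _ graph_iso_path_union[OF ps'(1,3)]] g ps'(2,4)
    unfolding csf_def by auto
  ultimately show ?thesis using in_path_span_path by metis
qed

lemma proper_colourings_insert_edge:
  "\<kappa> \<in> proper_colourings V (insert {a, b} F) \<longleftrightarrow> \<kappa> \<in> proper_colourings V F \<and> \<kappa> a \<noteq> \<kappa> b"
  unfolding proper_colourings_def by (auto simp: doubleton_eq_iff)

lemma chrom_coeff_delete_edge:
  assumes fin: "finite V" and e: "{x, y} \<in> E"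
  shows "chrom_coeff V (E - {{x, y}}) \<alpha> =
    chrom_coeff V E \<alpha> + card {\<kappa> \<in> colour_class V (E - {{x, y}}) \<alpha>. \<kappa> x = \<kappa> y}"
proof -
  define M where "M = {\<kappa> \<in> colour_class V (E - {{x, y}}) \<alpha>. \<kappa> x = \<kappa> y}"
  have "\<kappa> \<in> proper_colourings V E \<longleftrightarrow> \<kappa> \<in> proper_colourings V (E - {{x, y}}) \<and> \<kappa> x \<noteq> \<kappa> y" for \<kappa>
    using proper_colourings_insert_edge[of \<kappa> V x y "E - {{x, y}}"] e by (simp add: insert_absorb)
  then have "colour_class V (E - {{x, y}}) \<alpha> = colour_class V E \<alpha> \<union> M"
    and "colour_class V E \<alpha> \<inter> M = {}"
    unfolding colour_class_def M_def by auto
  moreover have "finite M" using finite_colour_class[OF fin] unfolding M_def by simp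
  ultimately show ?thesis
    unfolding chrom_coeff_colour_class M_def[symmetric] using finite_colour_class[OF fin]
    by (simp add: card_Un_disjoint)
qed

text \<open>Once \<open>x\<close> and \<open>y\<close> have the same colour, the edges \<open>xw\<close> and \<open>yw\<close> impose the same constraint.\<close>
lemma monochromatic_colour_class_edge_move:
  assumes xy: "x \<noteq> y" and wx: "w \<noteq> x" and wy: "w \<noteq> y" and xw: "{x, w} \<in> E"
    and E': "E' = insert {y, w} (E - {{x, w}})"
  shows "{\<kappa> \<in> colour_class V (E' - {{x, y}}) \<alpha>. \<kappa> x = \<kappa> y} =
    {\<kappa> \<in> colour_class V (E - {{x, y}}) \<alpha>. \<kappa> x = \<kappa> y}"
proof -
  define B where "B = E - {{x, w}, {x, y}}"
  have "E' - {{x, y}} = insert {y, w} B" unfolding E' B_def using wx xy by (auto simp: doubleton_eq_iff)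
  moreover have "E - {{x, y}} = insert {x, w} B" unfolding B_def using xw wy by (auto simp: doubleton_eq_iff)
  ultimately have "\<kappa> \<in> proper_colourings V (E' - {{x, y}}) \<longleftrightarrow> \<kappa> \<in> proper_colourings V (E - {{x, y}})"
    if "\<kappa> x = \<kappa> y" for \<kappa>
    using that by (simp only: proper_colourings_insert_edge)
  then show ?thesis unfolding colour_class_def by blast
qed

lemma csf_edge_move:
  assumes fin: "finite V" and xy: "{x, y} \<in> E" "x \<noteq> y" and xw: "{x, w} \<in> E" "w \<noteq> x" and wy: "w \<noteq> y"
    and E': "E' = insert {y, w} (E - {{x, w}})"
  shows "csf V E \<alpha> = csf V (E - {{x, y}}) \<alpha> + csf V E' \<alpha> - csf V (E' - {{x, y}}) \<alpha>"
proof -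
  have "{x, y} \<in> E'" using xy E' wy by (auto simp: doubleton_eq_iff)
  then show ?thesis
    using chrom_coeff_delete_edge[OF fin xy(1), of \<alpha>] chrom_coeff_delete_edge[OF fin, of x y E' \<alpha>]
      monochromatic_colour_class_edge_move[OF xy(2) xw(2) wy xw(1) E']
    unfolding csf_def by simp
qed

lemma is_cycle_closing_edge_unique:
  assumes c: "is_cycle E vs" and i: "Suc i < length vs"
  shows "{vs ! i, vs ! Suc i} \<noteq> {last vs, hd vs}"
proof
  assume h: "{vs ! i, vs ! Suc i} = {last vs, hd vs}"
  have l: "length vs \<ge> 3" and d: "distinct vs" using c unfolding is_cycle_def by auto
  have "vs \<noteq> []" using l by auto
  then have "last vs = vs ! (length vs - 1)" "hd vs = vs ! 0" by (simp_all add: last_conv_nth hd_conv_nth)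
  moreover have "i < length vs" "0 < length vs" "length vs - 1 < length vs" using i by auto
  ultimately have "(i = length vs - 1 \<and> Suc i = 0) \<or> (i = 0 \<and> Suc i = length vs - 1)"
    using h d i by (auto simp: doubleton_eq_iff nth_eq_iff_index_eq)
  then show False using l by auto
qed

lemma is_cycle_insert_edge:
  assumes c: "is_cycle (insert {a, b} F) vs" and nc: "\<not> is_cycle F vs"
  obtains us where "is_path F us" "us \<noteq> []" "hd us = a" "last us = b"
proof -
  let ?E = "insert {a, b} F"
  have l: "length vs \<ge> 3" using c unfolding is_cycle_def by simp
  obtain ws where ws: "is_cycle ?E ws" "{last ws, hd ws} = {a, b}"
  proof (cases "\<exists>i. Suc i < length vs \<and> {vs ! i, vs ! Suc i} = {a, b}")
    case True
    then obtain i where i: "Suc i < length vs" "{vs ! i, vs ! Suc i} = {a, b}" by blast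
    define ws where "ws = rotate (Suc i) vs"
    have ne: "vs \<noteq> []" using l by auto
    have "hd ws = vs ! (Suc i mod length vs)" unfolding ws_def by (rule hd_rotate_conv_nth[OF ne])
    then have "hd ws = vs ! Suc i" using i(1) by simp
    moreover have "last ws = vs ! i"
    proof -
      have "last ws = ws ! (length vs - 1)" unfolding ws_def using ne by (subst last_conv_nth) auto
      also have "\<dots> = vs ! ((Suc i + (length vs - 1)) mod length vs)"
        unfolding ws_def by (rule nth_rotate) (use ne in auto)
      also have "Suc i + (length vs - 1) = i + length vs" using ne by (cases vs) auto
      finally show ?thesis using i(1) by simp
    qed
    moreover have "is_cycle ?E ws" unfolding ws_def by (rule is_cycle_rotate[OF c])
    ultimately show ?thesis using that[of ws] i(2) by (simp add: insert_commute)
  next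
    case False
    have "{last vs, hd vs} = {a, b}"
    proof (rule ccontr)
      assume "{last vs, hd vs} \<noteq> {a, b}"
      then have "is_cycle F vs"
        using c False unfolding is_cycle_def successively_conv_nth adj_def by auto
      then show False using nc by simp
    qed
    then show ?thesis using that c by blast
  qed
  have "successively (adj F) ws"
    using ws is_cycle_closing_edge_unique[OF ws(1)]
    unfolding is_cycle_def successively_conv_nth adj_def by auto
  then have p: "is_path F ws" "is_path F (rev ws)" "ws \<noteq> []"
    using ws(1) unfolding is_path_def is_cycle_def by (auto simp: adj_commute)
  show ?thesis
  proof (cases "hd ws = a")
    case True
    then have "last ws = b" using ws(2) ws(1) unfolding is_cycle_def
      by (auto simp: doubleton_eq_iff last_conv_nth hd_conv_nth nth_eq_iff_index_eq)
    then show ?thesis using that p True by blast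
  next
    case False
    then have "hd ws = b" "last ws = a" using ws(2) by (auto simp: doubleton_eq_iff)
    then show ?thesis using that[of "rev ws"] p by (simp add: hd_rev last_rev)
  qed
qed

lemma forest_no_path_around_edge:
  assumes f: "is_forest V E" and xw: "{x, w} \<in> E"
    and p: "is_path (E - {{x, w}}) us" "us \<noteq> []" "hd us = x" "last us = w"
  shows False
proof -
  have g: "is_graph V E" using f is_forest_def by auto
  have "x \<noteq> w" using graph_edgeD(3)[OF g xw] .
  then have l: "length us \<ge> 2" using p(2-4) by (cases us) (auto split: if_splits simp: Suc_le_eq)
  have s: "successively (adj (E - {{x, w}})) us" using p(1) unfolding is_path_def by simp
  show False
  proof (cases "length us = 2")
    case True
    then have "us = [x, w]" using p(3,4) by (cases us) (auto simp: length_Suc_conv)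
    then show False using s by (simp add: adj_def)
  next
    case False
    have "successively (adj E) us" using s by (rule successively_mono) (auto simp: adj_def)
    then have "is_cycle E us"
      using False l p xw unfolding is_cycle_def is_path_def by (auto simp: adj_def insert_commute)
    then show False using f unfolding is_forest_iff by blast
  qed
qed

lemma forest_edge_move:
  assumes f: "is_forest V E" and xy: "{x, y} \<in> E" and xw: "{x, w} \<in> E" and wy: "w \<noteq> y"
    and E': "E' = insert {y, w} (E - {{x, w}})"
  shows "is_forest V E'" "{y, w} \<notin> E"
proof -
  have g: "is_graph V E" using f is_forest_def by auto
  have x: "x \<in> V" "x \<noteq> y" "x \<noteq> w" and V: "y \<in> V" "w \<in> V"
    using graph_edgeD[OF g xy] graph_edgeD[OF g xw] by auto
  show "{y, w} \<notin> E"
  proof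
    assume "{y, w} \<in> E"
    then have "is_cycle E [x, y, w]" unfolding is_cycle_def adj_def using x wy xy xw
      by (auto simp: insert_commute)
    then show False using f unfolding is_forest_iff by blast
  qed
  have "is_graph V E'"
    unfolding is_graph_def
  proof (intro conjI ballI)
    show "finite V" using g unfolding is_graph_def by simp
    fix e assume "e \<in> E'"
    then consider "e = {y, w}" | "e \<in> E" unfolding E' by blast
    then show "\<exists>u v. e = {u, v} \<and> u \<noteq> v \<and> u \<in> V \<and> v \<in> V"
      using g V wy unfolding is_graph_def by cases blast+
  qed
  moreover have "\<not> is_cycle E' vs" for vs
  proof
    assume c: "is_cycle E' vs"
    let ?F = "E - {{x, w}}"
    have "is_forest V ?F" by (rule is_forest_delete_edge[OF f])
    then have nc: "\<not> is_cycle ?F vs" unfolding is_forest_iff by blast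
    obtain us where us: "is_path ?F us" "us \<noteq> []" "hd us = y" "last us = w"
      by (rule is_cycle_insert_edge[OF c[unfolded E'] nc])
    show False
    proof (cases "x \<in> set us")
      case False
      have "{x, y} \<noteq> {x, w}" using wy by (auto simp: doubleton_eq_iff)
      then have "is_path ?F (x # us)"
        using us(1-3) False xy unfolding is_path_def by (cases us) (auto simp: adj_def)
      then show False using forest_no_path_around_edge[OF f xw, of "x # us"] us(2,4) by simp
    next
      case True
      then obtain as bs where ab: "us = as @ x # bs" by (meson split_list)
      then have "is_path ?F (x # bs)"
        using us(1) unfolding is_path_def by (simp add: successively_append_iff)
      moreover have "last (x # bs) = w" using us(4) ab by simp
      ultimately show False using forest_no_path_around_edge[OF f xw, of "x # bs"] by simp
    qed
  qed
  ultimately show "is_forest V E'" unfolding is_forest_iff by blast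
qed

lemma vertex_degree_edge_move:
  assumes g: "is_graph V E" and xy: "{x, y} \<in> E" and xw: "{x, w} \<in> E" and wy: "w \<noteq> y"
    and yw: "{y, w} \<notin> E" and E': "E' = insert {y, w} (E - {{x, w}})"
  shows "vertex_degree E' x = vertex_degree E x - 1" "vertex_degree E' y = Suc (vertex_degree E y)"
    "z \<noteq> x \<Longrightarrow> z \<noteq> y \<Longrightarrow> vertex_degree E' z = vertex_degree E z"
proof -
  have xny: "x \<noteq> y" and xnw: "x \<noteq> w" using graph_edgeD(3)[OF g xy] graph_edgeD(3)[OF g xw] .
  have fin: "finite (neighbours E v)" for v using finite_neighbours[OF g] .
  have "neighbours E' x = neighbours E x - {w}" "w \<in> neighbours E x"
    using xny xnw xw unfolding neighbours_def E' by (auto simp: doubleton_eq_iff)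
  then show "vertex_degree E' x = vertex_degree E x - 1" unfolding vertex_degree_def using fin by simp
  have "neighbours E' y = insert w (neighbours E y)" "w \<notin> neighbours E y"
    using xny xnw wy yw unfolding neighbours_def E' by (auto simp: doubleton_eq_iff)
  then show "vertex_degree E' y = Suc (vertex_degree E y)" unfolding vertex_degree_def using fin by simp
  assume zx: "z \<noteq> x" and zy: "z \<noteq> y"
  show "vertex_degree E' z = vertex_degree E z"
  proof (cases "z = w")
    case False
    then have "neighbours E' z = neighbours E z"
      unfolding neighbours_def E' using zx zy by (auto simp: doubleton_eq_iff)
    then show ?thesis unfolding vertex_degree_def by simp
  next
    case True
    have "neighbours E' z = insert y (neighbours E z - {x})" "x \<in> neighbours E z" "y \<notin> neighbours E z"
      unfolding neighbours_def E' True using xny xnw wy xw yw by (auto simp: doubleton_eq_iff insert_commute)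
    then show ?thesis unfolding vertex_degree_def using fin[of z] card_Suc_Diff1[OF fin[of z]] by simp
  qed
qed

definition excess :: "'a set \<Rightarrow> 'a set set \<Rightarrow> nat" where
  "excess V E = (\<Sum>v\<in>V. vertex_degree E v - 2)"

lemma excess_edge_move:
  assumes g: "is_graph V E" and xy: "{x, y} \<in> E" and xw: "{x, w} \<in> E" and wy: "w \<noteq> y"
    and yw: "{y, w} \<notin> E" and E': "E' = insert {y, w} (E - {{x, w}})"
  shows "excess V E' + (vertex_degree E x - 2) + (vertex_degree E y - 2) =
    excess V E + (vertex_degree E x - 3) + (vertex_degree E y - 1)"
proof -
  have fin: "finite V" using g is_graph_def by auto
  have x: "x \<in> V" "x \<noteq> y" and y: "y \<in> V" using graph_edgeD[OF g xy] by auto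
  note d = vertex_degree_edge_move[OF g xy xw wy yw E']
  have split: "excess V F = (\<Sum>v\<in>V - {x, y}. vertex_degree F v - 2) + (vertex_degree F x - 2) + (vertex_degree F y - 2)" for F
    unfolding excess_def using fin x y
    by (simp add: sum.remove[of V x] sum.remove[of "V - {x}" y] Diff_insert2[symmetric] algebra_simps)
  have "(\<Sum>v\<in>V - {x, y}. vertex_degree E' v - 2) = (\<Sum>v\<in>V - {x, y}. vertex_degree E v - 2)"
    using d(3) by (intro sum.cong) auto
  then show ?thesis using split[of E'] split[of E] d(1,2) by simp
qed

lemma card_edge_move:
  assumes "finite E" and "{x, w} \<in> E" and "{y, w} \<notin> E" and "E' = insert {y, w} (E - {{x, w}})"
  shows "card E' = card E"
proof -
  have "card E' = Suc (card (E - {{x, w}}))" using assms by simp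
  also have "\<dots> = card E" using card_Suc_Diff1[OF assms(1,2)] .
  finally show ?thesis .
qed

lemma in_path_span_edge_move:
  assumes f: "is_forest V E" and xy: "{x, y} \<in> E" and xw: "{x, w} \<in> E" and wy: "w \<noteq> y"
    and E': "E' = insert {y, w} (E - {{x, w}})"
    and "in_path_span (csf V (E - {{x, y}}))" "in_path_span (csf V E')" "in_path_span (csf V (E' - {{x, y}}))"
  shows "in_path_span (csf V E)"
proof -
  have g: "is_graph V E" using f is_forest_def by auto
  have "finite V" using g is_graph_def by auto
  then have "csf V E = (\<lambda>\<alpha>. 1 * (1 * csf V (E - {{x, y}}) \<alpha> + 1 * csf V E' \<alpha>) + (-1) * csf V (E' - {{x, y}}) \<alpha>)"
    using csf_edge_move[OF _ xy _ xw _ wy E'] graph_edgeD(3)[OF g xy] graph_edgeD(3)[OF g xw]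
    by (auto simp: fun_eq_iff)
  then show ?thesis using assms(6-8) by (simp only: in_path_span_lincomb)
qed

definition is_branch_path :: "'a set set \<Rightarrow> 'a list \<Rightarrow> bool" where
  "is_branch_path E p \<longleftrightarrow> is_path E p \<and> length p \<ge> 2 \<and> vertex_degree E (hd p) \<ge> 3 \<and> vertex_degree E (last p) \<le> 1 \<and>
    (\<forall>i. 0 < i \<longrightarrow> Suc i < length p \<longrightarrow> vertex_degree E (p ! i) \<le> 2)"

lemma branch_path_exists:
  assumes f: "is_forest V E" and v: "v \<in> V" "vertex_degree E v \<ge> 3"
  obtains p where "is_branch_path E p" "set p \<subseteq> V"
proof -
  have g: "is_graph V E" using f is_forest_def by auto
  obtain p where p: "is_path E p" "p \<noteq> []" "hd p = v" "set p \<subseteq> V" "neighbours E (last p) \<subseteq> set p"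
    using maximal_path_exists[OF g v(1)] by blast
  have last: "vertex_degree E (last p) \<le> 1" using forest_maximal_path_degree[OF f p(1,2,5)] .
  have "length p \<noteq> 1" using last v(2) p(2,3) by (cases p) auto
  then have len: "length p \<ge> 2" using p(2) by (cases p) (auto simp: Suc_le_eq)
  define I where "I = {i. Suc i < length p \<and> vertex_degree E (p ! i) \<ge> 3}"
  have "0 \<in> I" using len v(2) p(2,3) unfolding I_def by (simp add: hd_conv_nth)
  moreover have "finite I" unfolding I_def by (rule finite_subset[of _ "{..<length p}"]) auto
  ultimately have i: "Max I \<in> I" and imax: "\<And>j. j \<in> I \<Longrightarrow> j \<le> Max I" by (auto intro: Max_in)
  define q where "q = drop (Max I) p"
  have "is_path E q"
    using p(1) successively_append_iff[of "adj E" "take (Max I) p" q] unfolding q_def is_path_def by simp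
  moreover have "Suc (Max I) < length p" "vertex_degree E (p ! Max I) \<ge> 3" using i unfolding I_def by auto
  then have "length q \<ge> 2" "vertex_degree E (hd q) \<ge> 3" "vertex_degree E (last q) \<le> 1"
    using last unfolding q_def by (auto simp: hd_drop_conv_nth)
  moreover have "vertex_degree E (q ! j) \<le> 2" if j: "0 < j" "Suc j < length q" for j
  proof -
    have "Max I + j \<notin> I" using imax[of "Max I + j"] j(1) by auto
    moreover have "Suc (Max I + j) < length p" using j(2) unfolding q_def by simp
    ultimately show ?thesis using j(2) unfolding I_def q_def by simp
  qed
  moreover have "set q \<subseteq> V" using p(4) set_drop_subset unfolding q_def by fast
  ultimately show ?thesis using that unfolding is_branch_path_def by blast
qed

lemma branch_path_second_degree:
  assumes g: "is_graph V E" and p: "is_branch_path E p" "length p \<ge> 3"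
  shows "vertex_degree E (p ! 1) = 2"
proof -
  have path: "is_path E p" and interior: "vertex_degree E (p ! 1) \<le> 2"
    using p unfolding is_branch_path_def by auto
  have "{p ! 0, p ! Suc 0} \<in> E" "{p ! Suc 0, p ! Suc (Suc 0)} \<in> E"
    using is_path_edge[OF path] p(2) by auto
  then have sub: "{p ! 0, p ! 2} \<subseteq> neighbours E (p ! 1)"
    unfolding neighbours_def by (simp add: insert_commute numeral_2_eq_2)
  have "distinct p" "0 < length p" "2 < length p" using path p(2) unfolding is_path_def by auto
  then have "p ! 0 \<noteq> p ! 2" using nth_eq_iff_index_eq[of p 0 2] by simp
  moreover have "card {p ! 0, p ! 2} \<le> vertex_degree E (p ! 1)"
    unfolding vertex_degree_def using sub by (rule card_mono[OF finite_neighbours[OF g]])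
  ultimately show ?thesis using interior by simp
qed

lemma branch_path_tail_edge_move:
  assumes g: "is_graph V E" and p: "is_branch_path E p" "length p \<ge> 3"
    and w: "{p ! 0, w} \<in> E" "w \<noteq> p ! 1" "{p ! 1, w} \<notin> E"
    and E': "E' = insert {p ! 1, w} (E - {{p ! 0, w}})"
  shows "is_branch_path E' (tl p)"
proof -
  have path: "is_path E p" and last: "vertex_degree E (last p) \<le> 1"
    and interior: "\<And>i. 0 < i \<Longrightarrow> Suc i < length p \<Longrightarrow> vertex_degree E (p ! i) \<le> 2"
    using p(1) unfolding is_branch_path_def by auto
  have "{p ! 0, p ! Suc 0} \<in> E" using is_path_edge[OF path, of 0] p(2) by simp
  then have "{p ! 0, p ! 1} \<in> E" by simp
  note d = vertex_degree_edge_move[OF g this w(1,2,3) E']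
  have far: "p ! j \<noteq> p ! 0 \<and> p ! j \<noteq> p ! 1" if "2 \<le> j" "j < length p" for j
  proof -
    have "distinct p" "0 < length p" "1 < length p" using path p(2) unfolding is_path_def by auto
    then show ?thesis using that nth_eq_iff_index_eq[of p j 0] nth_eq_iff_index_eq[of p j 1] by auto
  qed
  obtain v q where pq: "p = v # q" using p(2) by (cases p) auto
  have "q \<noteq> []" using p(2) pq by auto
  have q: "tl p = q" "v = p ! 0" "v \<notin> set q" "distinct q" "successively (adj E) q"
    using path pq unfolding is_path_def by (auto simp: successively_Cons)
  have "successively (adj E') q"
    using q(5) by (rule successively_mono) (use q(2,3) in \<open>auto simp: adj_def E' doubleton_eq_iff\<close>)
  then have path': "is_path E' q" using q(4) unfolding is_path_def by simp
  have "hd q = p ! 1" using pq \<open>q \<noteq> []\<close> by (simp add: hd_conv_nth)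
  then have hd': "vertex_degree E' (hd q) = 3" using d(2) branch_path_second_degree[OF g p] by simp
  have "last q = p ! (length p - 1)" using pq \<open>q \<noteq> []\<close> by (simp add: last_conv_nth)
  then have last': "vertex_degree E' (last q) \<le> 1"
    using d(3) far[of "length p - 1"] last p(2) \<open>q \<noteq> []\<close> pq by simp
  have "vertex_degree E' (q ! i) \<le> 2" if "0 < i" "Suc i < length q" for i
    using d(3) far[of "Suc i"] interior[of "Suc i"] that pq by simp
  then show ?thesis using path' hd' last' p(2) pq unfolding is_branch_path_def q(1) by simp
qed

text \<open>Moving the edge \<open>vw\<close> at the branch vertex \<open>v\<close> to its path neighbour \<open>x\<close> keeps the excess
  unless \<open>x\<close> is the leaf, in which case it drops; otherwise \<open>x\<close> becomes the branch vertex of a shorter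
  branch path.\<close>
lemma in_path_span_branch_path:
  assumes IH: "\<And>E'. (E', E) \<in> measures [card, excess V] \<Longrightarrow> is_forest V E' \<Longrightarrow> in_path_span (csf V E')"
    and f: "is_forest V E" and p: "is_branch_path E p"
  shows "in_path_span (csf V E)"
  using assms
proof (induction "length p" arbitrary: E p rule: less_induct)
  case less
  have f: "is_forest V E" and p: "is_branch_path E p" using less.prems by auto
  have g: "is_graph V E" using f is_forest_def by auto
  have fin: "finite E" using finite_graph_edges[OF g] .
  have path: "is_path E p" and len: "length p \<ge> 2" and "vertex_degree E (hd p) \<ge> 3"
    and last: "vertex_degree E (last p) \<le> 1"
    using p unfolding is_branch_path_def by auto
  moreover have "hd p = p ! 0" using len by (intro hd_conv_nth) auto
  ultimately have hd: "vertex_degree E (p ! 0) \<ge> 3" by simp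
  define v x where "v = p ! 0" and "x = p ! 1"
  have vx: "{v, x} \<in> E" using is_path_edge[OF path, of 0] len unfolding v_def x_def by simp
  have "\<not> neighbours E v \<subseteq> {x}"
    using hd card_mono[of "{x}" "neighbours E v"] unfolding vertex_degree_def v_def by auto
  then obtain w where w: "{v, w} \<in> E" "w \<noteq> x" unfolding neighbours_def by auto
  define E' where "E' = insert {x, w} (E - {{v, w}})"
  have f': "is_forest V E'" and xw: "{x, w} \<notin> E" using forest_edge_move[OF f vx w E'_def] by auto
  have cE': "card E' = card E" using card_edge_move[OF fin w(1) xw E'_def] .
  have "{v, x} \<in> E'" using vx w(2) unfolding E'_def by (auto simp: doubleton_eq_iff)
  moreover have "finite E'" using f' finite_graph_edges unfolding is_forest_def by blast
  ultimately have "card (E' - {{v, x}}) < card E'" by (intro card_Diff1_less)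
  then have s3: "in_path_span (csf V (E' - {{v, x}}))"
    using less.prems(1) is_forest_delete_edge[OF f'] cE' by simp
  have s1: "in_path_span (csf V (E - {{v, x}}))"
    using less.prems(1) is_forest_delete_edge[OF f] card_Diff1_less[OF fin vx] by simp
  have ex: "excess V E' + (vertex_degree E v - 2) + (vertex_degree E x - 2) =
      excess V E + (vertex_degree E v - 3) + (vertex_degree E x - 1)"
    using excess_edge_move[OF g vx w xw E'_def] .
  have s2: "in_path_span (csf V E')"
  proof (cases "length p = 2")
    case True
    then have "x = last p" using len unfolding x_def by (cases p) (auto simp: last_conv_nth)
    then have "excess V E' < excess V E" using ex hd last unfolding v_def by simp
    then show ?thesis using less.prems(1) f' cE' by simp
  next
    case False
    then have "length p \<ge> 3" using len by simp
    then have "vertex_degree E x = 2" using branch_path_second_degree[OF g p] unfolding x_def by simp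
    then have "excess V E' = excess V E" using ex hd unfolding v_def by simp
    moreover have "is_branch_path E' (tl p)"
      using branch_path_tail_edge_move[OF g p \<open>length p \<ge> 3\<close>] w xw unfolding v_def x_def E'_def by blast
    ultimately show ?thesis using less.hyps[of "tl p" E'] less.prems(1) f' cE' len by simp
  qed
  show ?case using in_path_span_edge_move[OF f vx w(1) w(2) E'_def s1 s2 s3] .
qed

theorem forest_csf_in_path_span:
  assumes "is_forest V E"
  shows "in_path_span (csf V E)"
  using assms
proof (induction E rule: wf_induct[OF wf_measures[of "[card, excess V]"]])
  case (1 E)
  show ?case
  proof (cases "\<forall>v\<in>V. vertex_degree E v \<le> 2")
    case True
    then show ?thesis using csf_linear_forest_in_path_span[OF "1.prems"] by simp
  next
    case False
    then obtain v where "v \<in> V" "vertex_degree E v \<ge> 3" by fastforce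
    then obtain p where "is_branch_path E p" using branch_path_exists[OF "1.prems"] by blast
    then show ?thesis using in_path_span_branch_path "1.IH" "1.prems" by blast
  qed
qed

theorem proposition3p2:
  fixes V :: "'a set" and E :: "'a set set" and n m :: nat
  assumes "is_forest V E" and "card V = n" and "num_components V E = m"
  shows "(\<exists>a. path_expansion V E a) \<and>
         (\<forall>a. path_expansion V E a \<longrightarrow> tree_poly_of a = monom 1 m)"
  using forest_csf_in_path_span[OF assms(1)] tree_poly_of_forest[OF assms(1)] assms(3)
  unfolding in_path_span_iff_path_expansion by blast

end
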